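(* Let $\Omega$ be a nonempty set, $\succeq$ a regular stochastic order on $\mathfrak F(\Omega)$ and $\Gamma\subset\mathfrak F(\Omega)$ a convex cone. There is no $f\in\Gamma$ with $f\succeq1$ if and only if there exists $m\in\mathbb P_\succeq=\{\mu\in\mathbb P:\mu(N)=0\text{ whenever }0\succeq1_N\}$ such that $$\Gamma_\succeq=\{f\in\Gamma:f\succeq a\text{ for some }a\in\mathbb R\}\subset L^1(m)\quad\text{and}\quad\sup_{f\in\Gamma_\succeq}\int f\,dm\le0 .$$
   Context: $\mathfrak F(\Omega)$ is the set of real-valued functions on $\Omega$; inequalities are pointwise and constants are constant functions. A regular stochastic order is a reflexive, transitive binary relation $\succeq$ on $\mathfrak F(\Omega)$ such that: (TRIV) $0\not\succeq1$; (CONE) $f_i\succeq g_i$ and $a_i\ge0$ ($i=1,2$) imply $a_1f_1+a_2f_2\succeq a_1g_1+a_2g_2$; (CERT) $f\ge0$ implies $f\succeq0$; (APPR) $f+2^{-n}\succeq0$ for all $n$ implies $f\succeq0$; (REST) $f\succeq0$, $A\subset\Omega$ imply $f1_A\succeq0$. $\mathbb P$ is the set of finitely additive probabilities on all subsets of $\Omega$. For $\mu$ bounded finitely additive, $\int f\,d\mu:=\lim_n\int[(f^+\wedge n)-(f^-\wedge n)]d\mu$ if the limit exists in $[-\infty,\infty]$, else $\infty$; $L^1(m)$ denotes the $m$-integrable functions (Dunford–Schwartz). *)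

theory Defs
  imports Complex_Main "HOL-Library.Extended_Real" "HOL-Library.Indicator_Function"
begin

text \<open>The ground set Omega is the (nonempty) type 'a; F(Omega) is 'a => real.\<close>

definition regular_stochastic_order :: "(('a \<Rightarrow> real) \<Rightarrow> ('a \<Rightarrow> real) \<Rightarrow> bool) \<Rightarrow> bool" where
  "regular_stochastic_order R \<longleftrightarrow>
     (\<forall>f. R f f) \<and>
     (\<forall>f g h. R f g \<longrightarrow> R g h \<longrightarrow> R f h) \<and>
     \<not> R (\<lambda>_. 0) (\<lambda>_. 1) \<and>
     (\<forall>f1 f2 g1 g2 a1 a2. R f1 g1 \<longrightarrow> R f2 g2 \<longrightarrow> a1 \<ge> 0 \<longrightarrow> a2 \<ge> 0 \<longrightarrow>
        R (\<lambda>x. a1 * f1 x + a2 * f2 x) (\<lambda>x. a1 * g1 x + a2 * g2 x)) \<and>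
     (\<forall>f. (\<forall>x. f x \<ge> 0) \<longrightarrow> R f (\<lambda>_. 0)) \<and>
     (\<forall>f. (\<forall>n::nat. R (\<lambda>x. f x + (1/2)^n) (\<lambda>_. 0)) \<longrightarrow> R f (\<lambda>_. 0)) \<and>
     (\<forall>f A. R f (\<lambda>_. 0) \<longrightarrow> R (\<lambda>x. f x * indicator A x) (\<lambda>_. 0))"

definition convex_cone_fun :: "('a \<Rightarrow> real) set \<Rightarrow> bool" where
  "convex_cone_fun \<Gamma> \<longleftrightarrow>
     (\<forall>f\<in>\<Gamma>. \<forall>g\<in>\<Gamma>. \<forall>a b::real. a \<ge> 0 \<longrightarrow> b \<ge> 0 \<longrightarrow> (\<lambda>x. a * f x + b * g x) \<in> \<Gamma>)"

definition fa_prob :: "('a set \<Rightarrow> real) \<Rightarrow> bool" where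
  "fa_prob m \<longleftrightarrow> m UNIV = 1 \<and> (\<forall>A. m A \<ge> 0) \<and>
     (\<forall>A B. A \<inter> B = {} \<longrightarrow> m (A \<union> B) = m A + m B)"

definition simple_int :: "('a set \<Rightarrow> real) \<Rightarrow> ('a \<Rightarrow> real) \<Rightarrow> real" where
  "simple_int m s = (\<Sum>y\<in>range s. y * m (s -` {y}))"

text \<open>Dunford--Schwartz integrability (all subsets are measurable, m is nonnegative):
  a sequence of simple functions converging to f in m-measure and Cauchy in mean.\<close>
definition ds_has_integral :: "('a set \<Rightarrow> real) \<Rightarrow> ('a \<Rightarrow> real) \<Rightarrow> real \<Rightarrow> bool" where
  "ds_has_integral m f I \<longleftrightarrow>
     (\<exists>s :: nat \<Rightarrow> 'a \<Rightarrow> real.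
        (\<forall>n. finite (range (s n))) \<and>
        (\<forall>\<epsilon>>0. (\<lambda>n. m {x. \<bar>s n x - f x\<bar> > \<epsilon>}) \<longlonglongrightarrow> 0) \<and>
        (\<forall>\<epsilon>>0. \<exists>N. \<forall>n\<ge>N. \<forall>k\<ge>N. simple_int m (\<lambda>x. \<bar>s n x - s k x\<bar>) < \<epsilon>) \<and>
        (\<lambda>n. simple_int m (s n)) \<longlonglongrightarrow> I)"

definition ds_integrable :: "('a set \<Rightarrow> real) \<Rightarrow> ('a \<Rightarrow> real) \<Rightarrow> bool" where
  "ds_integrable m f \<longleftrightarrow> (\<exists>I. ds_has_integral m f I)"

definition ds_integral :: "('a set \<Rightarrow> real) \<Rightarrow> ('a \<Rightarrow> real) \<Rightarrow> real" where
  "ds_integral m f = (THE I. ds_has_integral m f I)"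

text \<open>The extended integral of the paper via truncations.\<close>
definition trunc_int :: "('a set \<Rightarrow> real) \<Rightarrow> ('a \<Rightarrow> real) \<Rightarrow> ereal" where
  "trunc_int m f =
     (let g = (\<lambda>n::nat. ereal (ds_integral m
                 (\<lambda>x. min (max (f x) 0) (real n) - min (max (- f x) 0) (real n))))
      in if (\<exists>L. g \<longlonglongrightarrow> L) then lim g else \<infinity>)"

definition P_order :: "(('a \<Rightarrow> real) \<Rightarrow> ('a \<Rightarrow> real) \<Rightarrow> bool) \<Rightarrow> ('a set \<Rightarrow> real) set" where
  "P_order R = {m. fa_prob m \<and> (\<forall>N. R (\<lambda>_. 0) (indicator N) \<longrightarrow> m N = 0)}"

definition Gamma_order :: "(('a \<Rightarrow> real) \<Rightarrow> ('a \<Rightarrow> real) \<Rightarrow> bool) \<Rightarrow> ('a \<Rightarrow> real) set \<Rightarrow> ('a \<Rightarrow> real) set" where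
  "Gamma_order R \<Gamma> = {f\<in>\<Gamma>. \<exists>a::real. R f (\<lambda>_. a)}"

end

theory Submission
  imports Defs
begin

text \<open>
  Necessity: if some \<open>f \<in> \<Gamma>\<close> satisfies \<open>f \<succeq> 1\<close>, then \<open>{f \<le> 1/2}\<close> is \<open>\<succeq>\<close>-null, hence \<open>m\<close>-null for
  every \<open>m \<in> \<P>\<^sub>\<succeq>\<close>, so every truncation of \<open>f\<close> has integral at least \<open>1/2\<close>.

  Sufficiency is a Hahn--Banach argument. After adjoining \<open>0\<close> to \<open>\<Gamma>\<close>, the hedge prices of a bounded
  \<open>g\<close>, i.e. the \<open>t\<close> with \<open>t + f \<succeq> g\<close> for some \<open>f \<in> \<Gamma>\<close>, are bounded below, since otherwise a multiple
  of some \<open>f \<in> \<Gamma>\<close> would dominate \<open>1\<close>. Their infimum is sublinear; a minimal sublinear functional below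
  it, which exists by Zorn's lemma, is linear. Restricted to indicators it is a finitely additive
  probability \<open>m \<in> \<P>\<^sub>\<succeq>\<close>, and on bounded functions it is the integral with respect to \<open>m\<close>. Finally,
  if \<open>f \<in> \<Gamma>\<close> and \<open>f \<succeq> a\<close>, then \<open>f\<close> dominates its truncations at levels \<open>n \<ge> |a| + 1\<close>, and these
  increase outside the \<open>m\<close>-null set \<open>{f \<le> a - 1}\<close>; so their integrals are nonpositive and converge,
  and the limit is the integral of \<open>f\<close>.
\<close>

section \<open>Simple functions and finitely additive probabilities\<close>

lemma finite_range_pair:
  "finite (range s) \<Longrightarrow> finite (range t) \<Longrightarrow> finite (range (\<lambda>x. (s x, t x)))"
  by (rule finite_subset[of _ "range s \<times> range t"]) auto

lemma finite_range_map2: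
  assumes "finite (range s)" "finite (range t)"
  shows "finite (range (\<lambda>x. F (s x) (t x)))"
proof -
  have "range (\<lambda>x. F (s x) (t x)) = (\<lambda>(a, b). F a b) ` range (\<lambda>x. (s x, t x))" by auto
  thus ?thesis using finite_range_pair[OF assms] by simp
qed

lemma finite_range_map: "finite (range s) \<Longrightarrow> finite (range (\<lambda>x. F (s x)))"
  by (simp add: image_image[symmetric])

lemma finite_range_const: "finite (range (\<lambda>_::'a. c::real))"
  by (rule finite_subset[of _ "{c}"]) auto

lemma finite_range_indicator: "finite (range (indicator A :: 'a \<Rightarrow> real))"
  by (rule finite_subset[of _ "{0, 1}"]) (auto simp: indicator_def)

lemma finite_range_imp_bounded: "finite (range (s::'a \<Rightarrow> real)) \<Longrightarrow> \<exists>C\<ge>0. \<forall>x. \<bar>s x\<bar> \<le> C"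
  by (intro exI[of _ "\<Sum>v\<in>range s. \<bar>v\<bar>"]) (auto intro: sum_nonneg member_le_sum)

lemma lim_inverse_Suc: "(\<lambda>n. 1 / (real n + 1)) \<longlonglongrightarrow> 0"
  using LIMSEQ_inverse_real_of_nat by (simp add: inverse_eq_divide add.commute)

lemma inverse_Suc_less: "e > 0 \<Longrightarrow> \<exists>M. \<forall>n\<ge>M. 1 / (real n + 1) < e"
  using order_tendstoD(2)[OF lim_inverse_Suc] by (simp add: eventually_sequentially)

context
  fixes m :: "'a set \<Rightarrow> real"
  assumes fa: "fa_prob m"
begin

lemma fa_prob_nonneg: "m A \<ge> 0"
  using fa unfolding fa_prob_def by blast

lemma fa_prob_add: "A \<inter> B = {} \<Longrightarrow> m (A \<union> B) = m A + m B"
  using fa unfolding fa_prob_def by blast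

lemma fa_prob_UNIV: "m UNIV = 1"
  using fa unfolding fa_prob_def by blast

lemma fa_prob_empty: "m {} = 0"
  using fa_prob_add[of "{}" "{}"] by simp

lemma fa_prob_mono: "A \<subseteq> B \<Longrightarrow> m A \<le> m B"
  using fa_prob_add[of A "B - A"] fa_prob_nonneg[of "B - A"] by (simp add: Un_absorb Un_Diff_cancel sup.absorb2)

lemma fa_prob_subadditive: "m (A \<union> B) \<le> m A + m B"
  using fa_prob_add[of A "B - A"] fa_prob_mono[of "B - A" B] by auto

lemma fa_prob_tendsto_zero_le:
  "\<forall>\<^sub>F n in sequentially. m (A n) \<le> u n \<Longrightarrow> u \<longlonglongrightarrow> 0 \<Longrightarrow> (\<lambda>n. m (A n)) \<longlonglongrightarrow> 0"
  by (rule tendsto_sandwich[OF always_eventually[OF allI[OF fa_prob_nonneg]] _ tendsto_const])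

lemma fa_prob_finite_UN:
  assumes "finite I" "disjoint_family_on A I"
  shows "m (\<Union>i\<in>I. A i) = (\<Sum>i\<in>I. m (A i))"
  using assms
proof (induction I rule: finite_induct)
  case empty then show ?case by (simp add: fa_prob_empty)
next
  case (insert i I)
  have "disjoint_family_on A I" using insert.prems by (auto simp: disjoint_family_on_def)
  moreover have "A i \<inter> (\<Union>j\<in>I. A j) = {}"
    using insert.prems insert.hyps(2) by (auto simp: disjoint_family_on_def)
  ultimately show ?case using insert.IH insert.hyps fa_prob_add by simp
qed

lemma simple_int_comp:
  assumes fin: "finite (range u)"
  shows "simple_int m (\<lambda>x. G (u x)) = (\<Sum>v\<in>range u. G v * m (u -` {v}))"
proof -
  have "simple_int m (\<lambda>x. G (u x)) = (\<Sum>y\<in>G ` range u. y * m ((\<lambda>x. G (u x)) -` {y}))"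
    unfolding simple_int_def by (simp add: image_image[symmetric])
  also have "\<dots> = (\<Sum>y\<in>G ` range u. \<Sum>v\<in>{v\<in>range u. G v = y}. G v * m (u -` {v}))"
  proof (rule sum.cong[OF refl])
    fix y
    have "(\<lambda>x. G (u x)) -` {y} = (\<Union>v\<in>{v\<in>range u. G v = y}. u -` {v})" by auto
    hence "m ((\<lambda>x. G (u x)) -` {y}) = (\<Sum>v\<in>{v\<in>range u. G v = y}. m (u -` {v}))"
      using fin by (auto intro!: fa_prob_finite_UN simp: disjoint_family_on_def)
    thus "y * m ((\<lambda>x. G (u x)) -` {y}) = (\<Sum>v\<in>{v\<in>range u. G v = y}. G v * m (u -` {v}))"
      by (simp add: sum_distrib_left)
  qed
  also have "\<dots> = (\<Sum>v\<in>range u. G v * m (u -` {v}))"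
    by (rule sum.group) (use fin in auto)
  finally show ?thesis .
qed

lemma simple_int_pair:
  assumes "finite (range s)" "finite (range t)"
  shows "simple_int m (\<lambda>x. F (s x) (t x)) =
    (\<Sum>v\<in>range (\<lambda>x. (s x, t x)). F (fst v) (snd v) * m ((\<lambda>x. (s x, t x)) -` {v}))"
  using simple_int_comp[OF finite_range_pair[OF assms], of "\<lambda>v. F (fst v) (snd v)"] by simp

lemma simple_int_lin:
  assumes "finite (range s)" "finite (range t)"
  shows "simple_int m (\<lambda>x. a * s x + b * t x) = a * simple_int m s + b * simple_int m t"
  using simple_int_pair[OF assms, of "\<lambda>p q. p"] simple_int_pair[OF assms, of "\<lambda>p q. q"]
    simple_int_pair[OF assms, of "\<lambda>p q. a * p + b * q"]
  by (simp add: sum_distrib_left sum.distrib algebra_simps)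

lemma simple_int_mono:
  assumes "finite (range s)" "finite (range t)" "\<And>x. s x \<le> t x"
  shows "simple_int m s \<le> simple_int m t"
  unfolding simple_int_pair[OF assms(1,2), of "\<lambda>p q. p", simplified]
    simple_int_pair[OF assms(1,2), of "\<lambda>p q. q", simplified]
  by (rule sum_mono) (auto intro!: mult_right_mono fa_prob_nonneg assms(3))

lemma simple_int_const: "simple_int m (\<lambda>_. c) = c"
proof -
  have "range (\<lambda>_::'a. c) = {c}" by auto
  thus ?thesis unfolding simple_int_def by (simp add: fa_prob_UNIV)
qed

lemma simple_int_indicator: "simple_int m (indicator A) = m A"
proof -
  have "simple_int m (indicator A) = simple_int m (\<lambda>x. (\<lambda>v. if v then 1 else 0) (x \<in> A))"
    by (rule arg_cong[where f="simple_int m"]) (auto simp: indicator_def)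
  also have "\<dots> = (\<Sum>v\<in>range (\<lambda>x. x \<in> A). (if v then 1 else 0) * m ((\<lambda>x. x \<in> A) -` {v}))"
    by (rule simple_int_comp) simp
  also have "\<dots> = (\<Sum>v\<in>UNIV. (if v then 1 else 0) * m ((\<lambda>x. x \<in> A) -` {v}))"
    by (rule sum.mono_neutral_left) (auto simp: fa_prob_empty)
  also have "\<dots> = m A" by (simp add: UNIV_bool vimage_def)
  finally show ?thesis .
qed

lemma simple_int_add:
  "finite (range s) \<Longrightarrow> finite (range t) \<Longrightarrow> simple_int m (\<lambda>x. s x + t x) = simple_int m s + simple_int m t"
  using simple_int_lin[of s t 1 1] by simp

lemma simple_int_diff:
  "finite (range s) \<Longrightarrow> finite (range t) \<Longrightarrow> simple_int m (\<lambda>x. s x - t x) = simple_int m s - simple_int m t"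
  using simple_int_lin[of s t 1 "-1"] by simp

lemma simple_int_cmult: "finite (range s) \<Longrightarrow> simple_int m (\<lambda>x. c * s x) = c * simple_int m s"
  using simple_int_lin[of s s c 0] by simp

lemma simple_int_nonneg: "finite (range s) \<Longrightarrow> (\<And>x. s x \<ge> 0) \<Longrightarrow> simple_int m s \<ge> 0"
  using simple_int_mono[of "\<lambda>_. 0" s] by (simp add: simple_int_const finite_range_const)

lemma simple_int_le_const: "finite (range s) \<Longrightarrow> (\<And>x. s x \<le> c) \<Longrightarrow> simple_int m s \<le> c"
  using simple_int_mono[of s "\<lambda>_. c"] by (simp add: simple_int_const finite_range_const)

end

section \<open>The Dunford--Schwartz integral\<close>

definition determining_seq :: "('a set \<Rightarrow> real) \<Rightarrow> (nat \<Rightarrow> 'a \<Rightarrow> real) \<Rightarrow> ('a \<Rightarrow> real) \<Rightarrow> bool" where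
  "determining_seq m s f \<longleftrightarrow>
     (\<forall>n. finite (range (s n))) \<and>
     (\<forall>\<epsilon>>0. (\<lambda>n. m {x. \<bar>s n x - f x\<bar> > \<epsilon>}) \<longlonglongrightarrow> 0) \<and>
     (\<forall>\<epsilon>>0. \<exists>N. \<forall>n\<ge>N. \<forall>k\<ge>N. simple_int m (\<lambda>x. \<bar>s n x - s k x\<bar>) < \<epsilon>)"

lemma ds_has_integral_iff:
  "ds_has_integral m f I \<longleftrightarrow> (\<exists>s. determining_seq m s f \<and> (\<lambda>n. simple_int m (s n)) \<longlonglongrightarrow> I)"
  unfolding ds_has_integral_def determining_seq_def by blast

context
  fixes m :: "'a set \<Rightarrow> real"
  assumes fa: "fa_prob m"
begin

lemma determining_seq_zero_imp_abs_tendsto: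
  assumes "determining_seq m w (\<lambda>_. 0)"
  shows "(\<lambda>n. simple_int m (\<lambda>x. \<bar>w n x\<bar>)) \<longlonglongrightarrow> 0"
proof (rule LIMSEQ_I)
  fix e :: real assume e: "0 < e"
  have fin: "\<And>n. finite (range (w n))"
    and meas: "\<And>\<epsilon>. \<epsilon> > 0 \<Longrightarrow> (\<lambda>n. m {x. \<bar>w n x\<bar> > \<epsilon>}) \<longlonglongrightarrow> 0"
    and cau: "\<And>\<epsilon>. \<epsilon> > 0 \<Longrightarrow> \<exists>N. \<forall>n\<ge>N. \<forall>k\<ge>N. simple_int m (\<lambda>x. \<bar>w n x - w k x\<bar>) < \<epsilon>"
    using assms unfolding determining_seq_def by auto
  obtain N where N: "\<forall>n\<ge>N. \<forall>k\<ge>N. simple_int m (\<lambda>x. \<bar>w n x - w k x\<bar>) < e/3"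
    using cau[of "e/3"] e by auto
  obtain C where C: "C \<ge> 0" "\<forall>x. \<bar>w N x\<bar> \<le> C" using finite_range_imp_bounded[OF fin[of N]] by blast
  have "e / (3 * (C + 1)) > 0" using e C by simp
  then obtain N2 where N2: "\<forall>n\<ge>N2. norm (m {x. \<bar>w n x\<bar> > e/3} - 0) < e / (3 * (C + 1))"
    using LIMSEQ_D[OF meas[of "e/3"]] e by auto
  show "\<exists>no. \<forall>n\<ge>no. norm (simple_int m (\<lambda>x. \<bar>w n x\<bar>) - 0) < e"
  proof (intro exI allI impI)
    fix n assume n: "max N N2 \<le> n"
    define E where "E = {x. \<bar>w n x\<bar> > e/3}"
    have fr: "finite (range (\<lambda>x. \<bar>w n x - w N x\<bar>))" by (rule finite_range_map2[OF fin fin])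
    have fr2: "finite (range (\<lambda>x. \<bar>w n x\<bar>))" by (rule finite_range_map[OF fin])
    have fr3: "finite (range (\<lambda>x. C * indicator E x))" by (rule finite_range_map[OF finite_range_indicator])
    have fr4: "finite (range (\<lambda>x. \<bar>w n x - w N x\<bar> + C * indicator E x))"
      by (rule finite_range_map2[OF fr fr3])
    \<comment> \<open>off \<open>E\<close>, \<open>w n\<close> is small; on \<open>E\<close>, compare with \<open>w N\<close>, which is bounded by \<open>C\<close>\<close>
    have pw: "\<bar>w n x\<bar> \<le> (\<bar>w n x - w N x\<bar> + C * indicator E x) + e/3" for x
      using C(2)[rule_format, of x] e by (cases "x \<in> E") (auto simp: E_def indicator_def)
    have "simple_int m (\<lambda>x. \<bar>w n x\<bar>) \<le> simple_int m (\<lambda>x. (\<bar>w n x - w N x\<bar> + C * indicator E x) + e/3)"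
      by (rule simple_int_mono[OF fa fr2 _ pw]) (rule finite_range_map2[OF fr4 finite_range_const])
    also have "\<dots> = simple_int m (\<lambda>x. \<bar>w n x - w N x\<bar>) + C * m E + e/3"
      using simple_int_add[OF fa fr4 finite_range_const] simple_int_add[OF fa fr fr3]
        simple_int_cmult[OF fa finite_range_indicator, of C E]
        simple_int_indicator[OF fa] simple_int_const[OF fa]
      by simp
    also have "\<dots> < e/3 + C * (e / (3 * (C + 1))) + e/3"
    proof -
      have "simple_int m (\<lambda>x. \<bar>w n x - w N x\<bar>) < e/3" using N n by auto
      moreover have "m E < e / (3 * (C + 1))" using N2 n fa_prob_nonneg[OF fa, of E] by (auto simp: E_def)
      hence "C * m E \<le> C * (e / (3 * (C + 1)))" using C(1) by (intro mult_left_mono) auto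
      ultimately show ?thesis by linarith
    qed
    also have "\<dots> \<le> e" using C(1) e by (simp add: field_simps)
    finally have "simple_int m (\<lambda>x. \<bar>w n x\<bar>) < e" .
    moreover have "simple_int m (\<lambda>x. \<bar>w n x\<bar>) \<ge> 0" by (rule simple_int_nonneg[OF fa fr2]) auto
    ultimately show "norm (simple_int m (\<lambda>x. \<bar>w n x\<bar>) - 0) < e" by simp
  qed
qed

lemma determining_seq_excess:
  assumes s: "determining_seq m s g" and t: "determining_seq m t h" and le: "\<And>x. g x \<le> h x"
  shows "determining_seq m (\<lambda>n x. max (s n x - t n x) 0) (\<lambda>_. 0)"
proof -
  have sf: "\<And>n. finite (range (s n))"
    and sm: "\<And>\<epsilon>. \<epsilon>>0 \<Longrightarrow> (\<lambda>n. m {x. \<bar>s n x - g x\<bar> > \<epsilon>}) \<longlonglongrightarrow> 0"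
    and sc: "\<And>\<epsilon>. \<epsilon>>0 \<Longrightarrow> \<exists>N. \<forall>n\<ge>N. \<forall>k\<ge>N. simple_int m (\<lambda>x. \<bar>s n x - s k x\<bar>) < \<epsilon>"
    using s unfolding determining_seq_def by blast+
  have tf: "\<And>n. finite (range (t n))"
    and tm: "\<And>\<epsilon>. \<epsilon>>0 \<Longrightarrow> (\<lambda>n. m {x. \<bar>t n x - h x\<bar> > \<epsilon>}) \<longlonglongrightarrow> 0"
    and tc: "\<And>\<epsilon>. \<epsilon>>0 \<Longrightarrow> \<exists>N. \<forall>n\<ge>N. \<forall>k\<ge>N. simple_int m (\<lambda>x. \<bar>t n x - t k x\<bar>) < \<epsilon>"
    using t unfolding determining_seq_def by blast+
  define w where "w n x = max (s n x - t n x) 0" for n x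
  have wf: "finite (range (w n))" for n
    unfolding w_def by (rule finite_range_map2[OF sf tf])
  have wm: "(\<lambda>n. m {x. \<bar>w n x - 0\<bar> > \<epsilon>}) \<longlonglongrightarrow> 0" if e: "\<epsilon> > 0" for \<epsilon>
  proof (rule fa_prob_tendsto_zero_le[OF fa])
    have "{x. \<bar>w n x - 0\<bar> > \<epsilon>} \<subseteq> {x. \<bar>s n x - g x\<bar> > \<epsilon>/2} \<union> {x. \<bar>t n x - h x\<bar> > \<epsilon>/2}" for n
    proof
      fix x assume "x \<in> {x. \<bar>w n x - 0\<bar> > \<epsilon>}"
      hence "s n x - t n x > \<epsilon>" using e by (auto simp: w_def max_def split: if_splits)
      thus "x \<in> {x. \<bar>s n x - g x\<bar> > \<epsilon>/2} \<union> {x. \<bar>t n x - h x\<bar> > \<epsilon>/2}"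
        using le[of x] by (auto simp: abs_if split: if_splits)
    qed
    hence "m {x. \<bar>w n x - 0\<bar> > \<epsilon>} \<le> m {x. \<bar>s n x - g x\<bar> > \<epsilon>/2} + m {x. \<bar>t n x - h x\<bar> > \<epsilon>/2}" for n
      by (rule order_trans[OF fa_prob_mono[OF fa] fa_prob_subadditive[OF fa]])
    thus "\<forall>\<^sub>F n in sequentially. m {x. \<bar>w n x - 0\<bar> > \<epsilon>} \<le> m {x. \<bar>s n x - g x\<bar> > \<epsilon>/2} + m {x. \<bar>t n x - h x\<bar> > \<epsilon>/2}"
      by simp
    show "(\<lambda>n. m {x. \<bar>s n x - g x\<bar> > \<epsilon>/2} + m {x. \<bar>t n x - h x\<bar> > \<epsilon>/2}) \<longlonglongrightarrow> 0"
      using tendsto_add[OF sm tm, of "\<epsilon>/2" "\<epsilon>/2"] e by simp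
  qed
  have wc: "\<exists>N. \<forall>n\<ge>N. \<forall>k\<ge>N. simple_int m (\<lambda>x. \<bar>w n x - w k x\<bar>) < \<epsilon>" if e: "\<epsilon> > 0" for \<epsilon>
  proof -
    obtain N1 where N1: "\<forall>n\<ge>N1. \<forall>k\<ge>N1. simple_int m (\<lambda>x. \<bar>s n x - s k x\<bar>) < \<epsilon>/2"
      using sc[of "\<epsilon>/2"] e by auto
    obtain N2 where N2: "\<forall>n\<ge>N2. \<forall>k\<ge>N2. simple_int m (\<lambda>x. \<bar>t n x - t k x\<bar>) < \<epsilon>/2"
      using tc[of "\<epsilon>/2"] e by auto
    show ?thesis
    proof (intro exI allI impI)
      fix n k assume n: "max N1 N2 \<le> n" and k: "max N1 N2 \<le> k"
      have f1: "finite (range (\<lambda>x. \<bar>s n x - s k x\<bar>))" by (rule finite_range_map2[OF sf sf])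
      have f2: "finite (range (\<lambda>x. \<bar>t n x - t k x\<bar>))" by (rule finite_range_map2[OF tf tf])
      have "simple_int m (\<lambda>x. \<bar>w n x - w k x\<bar>) \<le> simple_int m (\<lambda>x. \<bar>s n x - s k x\<bar> + \<bar>t n x - t k x\<bar>)"
        by (rule simple_int_mono[OF fa finite_range_map2[OF wf wf] finite_range_map2[OF f1 f2]])
          (simp add: w_def abs_le_iff max_def; linarith)
      also have "\<dots> < \<epsilon>"
      proof -
        have "simple_int m (\<lambda>x. \<bar>s n x - s k x\<bar>) < \<epsilon>/2" using N1 n k by auto
        moreover have "simple_int m (\<lambda>x. \<bar>t n x - t k x\<bar>) < \<epsilon>/2" using N2 n k by auto
        ultimately show ?thesis using simple_int_add[OF fa f1 f2] by linarith
      qed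
      finally show "simple_int m (\<lambda>x. \<bar>w n x - w k x\<bar>) < \<epsilon>" .
    qed
  qed
  show ?thesis unfolding determining_seq_def w_def[symmetric] using wf wm wc by blast
qed

lemma ds_has_integral_mono:
  assumes g: "ds_has_integral m g I" and h: "ds_has_integral m h J" and le: "\<And>x. g x \<le> h x"
  shows "I \<le> J"
proof -
  obtain s where s: "determining_seq m s g" and sl: "(\<lambda>n. simple_int m (s n)) \<longlonglongrightarrow> I"
    using g unfolding ds_has_integral_iff by blast
  obtain t where t: "determining_seq m t h" and tl: "(\<lambda>n. simple_int m (t n)) \<longlonglongrightarrow> J"
    using h unfolding ds_has_integral_iff by blast
  have sf: "finite (range (s n))" and tf: "finite (range (t n))" for n
    using s t unfolding determining_seq_def by blast+
  define w where "w n x = max (s n x - t n x) 0" for n x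
  have w0: "(\<lambda>n. simple_int m (\<lambda>x. \<bar>w n x\<bar>)) \<longlonglongrightarrow> 0"
    unfolding w_def by (rule determining_seq_zero_imp_abs_tendsto[OF determining_seq_excess[OF s t le]])
  have "simple_int m (s n) \<le> simple_int m (t n) + simple_int m (\<lambda>x. \<bar>w n x\<bar>)" for n
  proof -
    have fw: "finite (range (\<lambda>x. \<bar>w n x\<bar>))" unfolding w_def by (rule finite_range_map2[OF sf tf])
    have "simple_int m (s n) \<le> simple_int m (\<lambda>x. t n x + \<bar>w n x\<bar>)"
      by (rule simple_int_mono[OF fa sf finite_range_map2[OF tf fw]]) (auto simp: w_def)
    thus ?thesis using simple_int_add[OF fa tf fw] by simp
  qed
  moreover have "(\<lambda>n. simple_int m (t n) + simple_int m (\<lambda>x. \<bar>w n x\<bar>)) \<longlonglongrightarrow> J + 0"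
    by (rule tendsto_add[OF tl w0])
  ultimately show ?thesis using LIMSEQ_le[OF sl] by fastforce
qed

lemma ds_integral_eqI: "ds_has_integral m g I \<Longrightarrow> ds_integral m g = I"
  unfolding ds_integral_def by (rule the_equality) (auto intro: antisym ds_has_integral_mono)

lemma ds_has_integral_simple: "finite (range s) \<Longrightarrow> ds_has_integral m s (simple_int m s)"
  unfolding ds_has_integral_def
  by (intro exI[of _ "\<lambda>n. s"]) (simp add: fa_prob_empty[OF fa] simple_int_const[OF fa])

lemma determining_seq_convergent:
  assumes "determining_seq m s f"
  shows "convergent (\<lambda>n. simple_int m (s n))"
proof (rule Cauchy_convergent, rule CauchyI)
  fix e :: real assume "0 < e"
  then obtain N where N: "\<forall>n\<ge>N. \<forall>k\<ge>N. simple_int m (\<lambda>x. \<bar>s n x - s k x\<bar>) < e"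
    and sf: "\<And>n. finite (range (s n))"
    using assms unfolding determining_seq_def by blast
  have bound: "\<bar>simple_int m (s n) - simple_int m (s k)\<bar> \<le> simple_int m (\<lambda>x. \<bar>s n x - s k x\<bar>)" for n k
  proof -
    have fd: "finite (range (\<lambda>x. s n x - s k x))" "finite (range (\<lambda>x. s k x - s n x))"
      and fabs: "finite (range (\<lambda>x. \<bar>s n x - s k x\<bar>))"
      by (rule finite_range_map2[OF sf sf])+
    have "simple_int m (\<lambda>x. s n x - s k x) \<le> simple_int m (\<lambda>x. \<bar>s n x - s k x\<bar>)"
      by (rule simple_int_mono[OF fa fd(1) fabs]) simp
    moreover have "simple_int m (\<lambda>x. s k x - s n x) \<le> simple_int m (\<lambda>x. \<bar>s n x - s k x\<bar>)"
      by (rule simple_int_mono[OF fa fd(2) fabs]) simp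
    ultimately show ?thesis
      unfolding simple_int_diff[OF fa sf sf] abs_le_iff by linarith
  qed
  show "\<exists>M. \<forall>n\<ge>M. \<forall>k\<ge>M. norm (simple_int m (s n) - simple_int m (s k)) < e"
  proof (intro exI allI impI)
    fix n k assume "N \<le> n" "N \<le> k"
    hence "simple_int m (\<lambda>x. \<bar>s n x - s k x\<bar>) < e" using N by blast
    thus "norm (simple_int m (s n) - simple_int m (s k)) < e"
      using bound[of n k] unfolding real_norm_def by linarith
  qed
qed

lemma determining_seq_uniform:
  assumes sf: "\<And>n. finite (range (s n))"
    and sa: "\<And>n x. \<bar>s n x - g x\<bar> \<le> 1 / (real n + 1)"
  shows "determining_seq m s g"
  unfolding determining_seq_def
proof (intro conjI allI impI)
  show "finite (range (s n))" for n by (rule sf)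
  fix \<epsilon> :: real assume e: "\<epsilon> > 0"
  obtain M where M: "\<forall>n\<ge>M. 1 / (real n + 1) < \<epsilon>" using inverse_Suc_less[OF e] by blast
  have "m {x. \<bar>s n x - g x\<bar> > \<epsilon>} = 0" if "n \<ge> M" for n
  proof -
    have "\<bar>s n x - g x\<bar> < \<epsilon>" for x using M that sa[of n x] by (meson le_less_trans)
    hence "{x. \<bar>s n x - g x\<bar> > \<epsilon>} = {}" by (auto simp: not_less less_imp_le)
    thus ?thesis by (simp add: fa_prob_empty[OF fa])
  qed
  hence "\<forall>\<^sub>F n in sequentially. m {x. \<bar>s n x - g x\<bar> > \<epsilon>} = 0"
    unfolding eventually_sequentially by blast
  thus "(\<lambda>n. m {x. \<bar>s n x - g x\<bar> > \<epsilon>}) \<longlonglongrightarrow> 0" by (rule tendsto_eventually)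
  obtain M' where M': "\<forall>n\<ge>M'. 1 / (real n + 1) < \<epsilon>/2" using inverse_Suc_less[of "\<epsilon>/2"] e by auto
  have "simple_int m (\<lambda>x. \<bar>s n x - s k x\<bar>) \<le> 1/(real n + 1) + 1/(real k + 1)" for n k
  proof (rule simple_int_le_const[OF fa finite_range_map2[OF sf sf]])
    fix x show "\<bar>s n x - s k x\<bar> \<le> 1/(real n + 1) + 1/(real k + 1)"
      using sa[of n x] sa[of k x] by linarith
  qed
  moreover have "1/(real n + 1) + 1/(real k + 1) < \<epsilon>" if "n \<ge> M'" "k \<ge> M'" for n k
    using M' that by (smt (verit) field_sum_of_halves)
  ultimately show "\<exists>N. \<forall>n\<ge>N. \<forall>k\<ge>N. simple_int m (\<lambda>x. \<bar>s n x - s k x\<bar>) < \<epsilon>"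
    by (meson le_less_trans)
qed

lemma ds_has_integral_uniform_limit:
  assumes "\<And>n. finite (range (s n))" "\<And>n x. \<bar>s n x - g x\<bar> \<le> 1 / (real n + 1)"
  shows "ds_has_integral m g (lim (\<lambda>n. simple_int m (s n)))"
  using determining_seq_uniform[OF assms] determining_seq_convergent
  unfolding ds_has_integral_iff convergent_LIMSEQ_iff by blast

end

text \<open>Rounding down to the grid \<open>\<int> / (n + 1)\<close>.\<close>

lemma uniform_simple_approx:
  assumes "\<And>x. \<bar>g x\<bar> \<le> C"
  obtains s where "\<And>n. finite (range (s n))" "\<And>n x. \<bar>s n x - g x\<bar> \<le> 1 / (real n + 1)"
proof
  define s where "s n x = real_of_int \<lfloor>(real n + 1) * g x\<rfloor> / (real n + 1)" for n x
  fix n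
  have "range (s n) \<subseteq> (\<lambda>k. real_of_int k / (real n + 1)) ` {\<lfloor>(real n + 1) * (-C)\<rfloor> .. \<lfloor>(real n + 1) * C\<rfloor>}"
  proof
    fix y assume "y \<in> range (s n)"
    then obtain x where y: "y = s n x" by auto
    have "(real n + 1) * (-C) \<le> (real n + 1) * g x" "(real n + 1) * g x \<le> (real n + 1) * C"
      using assms[of x] by (auto intro!: mult_left_mono simp del: mult_minus_right)
    hence "\<lfloor>(real n + 1) * g x\<rfloor> \<in> {\<lfloor>(real n + 1) * (-C)\<rfloor> .. \<lfloor>(real n + 1) * C\<rfloor>}"
      by (auto intro: floor_mono)
    thus "y \<in> (\<lambda>k. real_of_int k / (real n + 1)) ` {\<lfloor>(real n + 1) * (-C)\<rfloor> .. \<lfloor>(real n + 1) * C\<rfloor>}"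
      unfolding y s_def by blast
  qed
  thus "finite (range (s n))" by (rule finite_subset) simp
  fix x
  have a: "real_of_int \<lfloor>(real n + 1) * g x\<rfloor> \<le> (real n + 1) * g x" by (rule of_int_floor_le)
  have b: "(real n + 1) * g x < real_of_int \<lfloor>(real n + 1) * g x\<rfloor> + 1" by (rule real_of_int_floor_add_one_gt)
  have "g x - s n x = ((real n + 1) * g x - real_of_int \<lfloor>(real n + 1) * g x\<rfloor>) / (real n + 1)"
    unfolding s_def by (simp add: field_simps)
  also have "\<dots> < 1 / (real n + 1)" using b by (intro divide_strict_right_mono) linarith+
  finally have "g x - s n x < 1 / (real n + 1)" .
  moreover have "s n x \<le> g x" using a unfolding s_def by (simp add: divide_le_eq mult.commute)
  ultimately show "\<bar>s n x - g x\<bar> \<le> 1 / (real n + 1)" by simp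
qed

lemma bounded_ds_has_integral:
  assumes "fa_prob m" "\<And>x. \<bar>g x\<bar> \<le> C"
  shows "ds_has_integral m g (ds_integral m g)"
proof -
  obtain s where "\<And>n. finite (range (s n))" "\<And>n x. \<bar>s n x - g x\<bar> \<le> 1 / (real n + 1)"
    using uniform_simple_approx[of g C] assms(2) by blast
  hence "ds_has_integral m g (lim (\<lambda>n. simple_int m (s n)))"
    by (rule ds_has_integral_uniform_limit[OF assms(1)])
  moreover from this have "ds_integral m g = lim (\<lambda>n. simple_int m (s n))"
    by (rule ds_integral_eqI[OF assms(1)])
  ultimately show ?thesis by simp
qed

locale regular_order =
  fixes R :: "('a \<Rightarrow> real) \<Rightarrow> ('a \<Rightarrow> real) \<Rightarrow> bool"
  assumes regular: "regular_stochastic_order R"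
begin

lemma R_refl: "R f f"
  using regular unfolding regular_stochastic_order_def by blast

lemma R_triv: "\<not> R (\<lambda>_. 0) (\<lambda>_. 1)"
  using regular unfolding regular_stochastic_order_def by blast

lemma R_cone:
  "R f1 g1 \<Longrightarrow> R f2 g2 \<Longrightarrow> a1 \<ge> 0 \<Longrightarrow> a2 \<ge> 0 \<Longrightarrow>
   R (\<lambda>x. a1 * f1 x + a2 * f2 x) (\<lambda>x. a1 * g1 x + a2 * g2 x)"
  using regular unfolding regular_stochastic_order_def by blast

lemma R_nonneg: "(\<And>x. f x \<ge> 0) \<Longrightarrow> R f (\<lambda>_. 0)"
  using regular unfolding regular_stochastic_order_def by blast

lemma R_restrict: "R f (\<lambda>_. 0) \<Longrightarrow> R (\<lambda>x. f x * indicator A x) (\<lambda>_. 0)"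
  using regular unfolding regular_stochastic_order_def by blast

lemma R_cong: "R f g \<Longrightarrow> (\<And>x. f x = f' x) \<Longrightarrow> (\<And>x. g x = g' x) \<Longrightarrow> R f' g'"
  by (metis ext)

lemma R_add: "R f g \<Longrightarrow> R f' g' \<Longrightarrow> R (\<lambda>x. f x + f' x) (\<lambda>x. g x + g' x)"
  by (rule R_cong[OF R_cone[of f g f' g' 1 1]]) auto

lemma R_scale: "c \<ge> 0 \<Longrightarrow> R f g \<Longrightarrow> R (\<lambda>x. c * f x) (\<lambda>x. c * g x)"
  by (rule R_cong[OF R_cone[of f g g g c 0]]) (auto intro: R_refl)

lemma R_diff_iff: "R (\<lambda>x. f x - g x) (\<lambda>_. 0) \<longleftrightarrow> R f g"
proof
  assume "R (\<lambda>x. f x - g x) (\<lambda>_. 0)"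
  from R_add[OF this R_refl[of g]] show "R f g" by (rule R_cong) auto
next
  assume "R f g"
  from R_add[OF this R_refl[of "\<lambda>x. - g x"]] show "R (\<lambda>x. f x - g x) (\<lambda>_. 0)" by (rule R_cong) auto
qed

lemma R_null_set:
  assumes f: "R f (\<lambda>_. a)" and d: "\<delta> > 0"
  shows "R (\<lambda>_. 0) (indicator {x. f x \<le> a - \<delta>})"
proof -
  define N where "N = {x. f x \<le> a - \<delta>}"
  have "R (\<lambda>x. (f x - a) * indicator N x) (\<lambda>_. 0)"
    by (rule R_restrict) (use f in \<open>simp add: R_diff_iff\<close>)
  moreover have "R (\<lambda>x. - \<delta> * indicator N x - (f x - a) * indicator N x) (\<lambda>_. 0)"
    by (rule R_nonneg) (auto simp: N_def indicator_def)
  ultimately have "R (\<lambda>x. 0 - \<delta> * indicator N x) (\<lambda>_. 0)"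
    by (rule R_cong[OF R_add]) auto
  hence "R (\<lambda>_. 0) (\<lambda>x. \<delta> * indicator N x)"
    using R_diff_iff[of "\<lambda>_. 0" "\<lambda>x. \<delta> * indicator N x"] by simp
  hence "R (\<lambda>x. (1/\<delta>) * 0) (\<lambda>x. (1/\<delta>) * (\<delta> * indicator N x))"
    by (intro R_scale) (use d in auto)
  thus ?thesis unfolding N_def[symmetric] by (rule R_cong) (use d in auto)
qed

end

definition trunc :: "('a \<Rightarrow> real) \<Rightarrow> nat \<Rightarrow> 'a \<Rightarrow> real" where
  "trunc f n x = min (max (f x) 0) (real n) - min (max (- f x) 0) (real n)"

lemma trunc_eq: "trunc f n x = max (- real n) (min (f x) (real n))"
  unfolding trunc_def by (auto simp: min_def max_def)

lemma abs_trunc_le: "\<bar>trunc f n x\<bar> \<le> real n"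
  unfolding trunc_eq by auto

lemma trunc_int_eq_lim:
  "trunc_int m f =
     (if \<exists>L. (\<lambda>n. ereal (ds_integral m (trunc f n))) \<longlonglongrightarrow> L
      then lim (\<lambda>n. ereal (ds_integral m (trunc f n))) else \<infinity>)"
  unfolding trunc_int_def trunc_def Let_def ..

lemma trunc_int_eqI:
  "(\<lambda>n. ds_integral m (trunc f n)) \<longlonglongrightarrow> L \<Longrightarrow> trunc_int m f = ereal L"
  unfolding trunc_int_eq_lim by (auto intro: limI)

lemma trunc_int_ge:
  assumes "\<And>n. n \<ge> 1 \<Longrightarrow> ds_integral m (trunc f n) \<ge> c"
  shows "trunc_int m f \<ge> ereal c"
proof (cases "\<exists>L. (\<lambda>n. ereal (ds_integral m (trunc f n))) \<longlonglongrightarrow> L")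
  case True
  then obtain L where L: "(\<lambda>n. ereal (ds_integral m (trunc f n))) \<longlonglongrightarrow> L" by blast
  have "ereal c \<le> L"
    by (rule LIMSEQ_le_const[OF L]) (use assms in \<open>auto intro!: exI[of _ 1]\<close>)
  thus ?thesis using L by (simp add: trunc_int_eq_lim limI)
qed (simp add: trunc_int_eq_lim)

section \<open>Necessity\<close>

lemma (in regular_order) trunc_int_ge_half:
  assumes m: "m \<in> P_order R" and f: "R f (\<lambda>_. 1)"
  shows "trunc_int m f \<ge> ereal (1/2)"
proof (rule trunc_int_ge)
  fix n :: nat assume n: "n \<ge> 1"
  have fa: "fa_prob m" using m unfolding P_order_def by auto
  define N where "N = {x. f x \<le> 1 - 1/2}"
  have "m N = 0"
    using m R_null_set[OF f, of "1/2"] unfolding P_order_def N_def by auto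
  define s where "s x = 1/2 - (real n + 1) * indicator N x" for x
  have fs: "finite (range s)"
    unfolding s_def by (rule finite_range_map[OF finite_range_indicator])
  have "simple_int m s = 1/2"
    unfolding s_def
    using simple_int_diff[OF fa finite_range_const finite_range_map[OF finite_range_indicator],
        of "1/2" "\<lambda>v. (real n + 1) * v" N]
      simple_int_cmult[OF fa finite_range_indicator] simple_int_indicator[OF fa]
      simple_int_const[OF fa] \<open>m N = 0\<close>
    by simp
  moreover have "simple_int m s \<le> ds_integral m (trunc f n)"
  proof (rule ds_has_integral_mono[OF fa ds_has_integral_simple[OF fa fs]
        bounded_ds_has_integral[OF fa abs_trunc_le]])
    fix x show "s x \<le> trunc f n x"
      using abs_trunc_le[of f n x] n
      by (cases "x \<in> N") (auto simp: s_def N_def indicator_def trunc_eq)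
  qed
  ultimately show "ds_integral m (trunc f n) \<ge> 1/2" by simp
qed

lemma (in regular_order) not_ge_one_if_representing_prob:
  assumes m: "m \<in> P_order R" and sup: "(SUP f\<in>Gamma_order R \<Gamma>. trunc_int m f) \<le> 0"
    and f: "f \<in> \<Gamma>"
  shows "\<not> R f (\<lambda>_. 1)"
proof
  assume one: "R f (\<lambda>_. 1)"
  hence "f \<in> Gamma_order R \<Gamma>" using f unfolding Gamma_order_def by blast
  have "ereal (1/2) \<le> trunc_int m f" by (rule trunc_int_ge_half[OF m one])
  also have "\<dots> \<le> 0" using SUP_upper[OF \<open>f \<in> Gamma_order R \<Gamma>\<close>, of "trunc_int m"] sup by (rule order_trans)
  finally show False by simp
qed

definition bounded_fun :: "('a \<Rightarrow> real) \<Rightarrow> bool" where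
  "bounded_fun g \<longleftrightarrow> (\<exists>C. \<forall>x. \<bar>g x\<bar> \<le> C)"

lemma bounded_funI: "(\<And>x. \<bar>g x\<bar> \<le> C) \<Longrightarrow> bounded_fun g"
  unfolding bounded_fun_def by blast

lemma bounded_fun_add:
  assumes "bounded_fun g" "bounded_fun h"
  shows "bounded_fun (\<lambda>x. g x + h x)"
proof -
  obtain C D where C: "\<And>x. \<bar>g x\<bar> \<le> C" and D: "\<And>x. \<bar>h x\<bar> \<le> D"
    using assms unfolding bounded_fun_def by blast
  have "\<bar>g x + h x\<bar> \<le> C + D" for x using C[of x] D[of x] by linarith
  thus ?thesis by (rule bounded_funI)
qed

lemma bounded_fun_scale:
  assumes "bounded_fun g"
  shows "bounded_fun (\<lambda>x. c * g x)"
proof -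
  obtain C where "\<And>x. \<bar>g x\<bar> \<le> C" using assms unfolding bounded_fun_def by blast
  hence "\<bar>c * g x\<bar> \<le> \<bar>c\<bar> * C" for x by (simp add: abs_mult mult_left_mono)
  thus ?thesis by (rule bounded_funI)
qed

lemma bounded_fun_minus: "bounded_fun g \<Longrightarrow> bounded_fun (\<lambda>x. - g x)"
  using bounded_fun_scale[of g "-1"] by simp

lemma bounded_fun_diff: "bounded_fun g \<Longrightarrow> bounded_fun h \<Longrightarrow> bounded_fun (\<lambda>x. g x - h x)"
  using bounded_fun_add[of g "\<lambda>x. - h x"] bounded_fun_minus[of h] by simp

lemma bounded_fun_abs: "bounded_fun g \<Longrightarrow> bounded_fun (\<lambda>x. \<bar>g x\<bar>)"
  unfolding bounded_fun_def by simp

lemma bounded_fun_const: "bounded_fun (\<lambda>_. c)"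
  by (rule bounded_funI[of _ "\<bar>c\<bar>"]) simp

lemma bounded_fun_indicator: "bounded_fun (indicator A)"
  by (rule bounded_funI[of _ 1]) (simp add: indicator_def)

lemma bounded_fun_finite_range: "finite (range s) \<Longrightarrow> bounded_fun s"
  using finite_range_imp_bounded unfolding bounded_fun_def by blast

lemma bounded_fun_trunc: "bounded_fun (trunc f n)"
  using abs_trunc_le by (rule bounded_funI)

lemma bounded_fun_sum:
  "finite Y \<Longrightarrow> (\<And>y. y \<in> Y \<Longrightarrow> bounded_fun (F y)) \<Longrightarrow> bounded_fun (\<lambda>x. \<Sum>y\<in>Y. F y x)"
  by (induction Y rule: finite_induct) (auto intro: bounded_fun_add bounded_fun_const)

lemma uniform_simple_approx_seq:
  assumes "\<And>n. bounded_fun (g n)"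
  obtains s where "\<And>n. finite (range (s n))" "\<And>n x. \<bar>s n x - g n x\<bar> \<le> 1 / (real n + 1)"
proof -
  have "\<forall>n. \<exists>s. finite (range s) \<and> (\<forall>x. \<bar>s x - g n x\<bar> \<le> 1 / (real n + 1))"
  proof
    fix n
    obtain C where C: "\<And>x. \<bar>g n x\<bar> \<le> C" using assms[of n] unfolding bounded_fun_def by blast
    obtain s where "\<And>k. finite (range (s k))" "\<And>k x. \<bar>s k x - g n x\<bar> \<le> 1 / (real k + 1)"
      using uniform_simple_approx[of "g n" C, OF C] by blast
    thus "\<exists>s. finite (range s) \<and> (\<forall>x. \<bar>s x - g n x\<bar> \<le> 1 / (real n + 1))"
      by (intro exI[of _ "s n"]) simp
  qed
  from choice[OF this] obtain s where "\<forall>n. finite (range (s n)) \<and> (\<forall>x. \<bar>s n x - g n x\<bar> \<le> 1 / (real n + 1))"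
    by blast
  hence "finite (range (s n))" "\<bar>s n x - g n x\<bar> \<le> 1 / (real n + 1)" for n x by simp_all
  thus ?thesis by (rule that)
qed

lemma le_Inf_add:
  fixes X Y :: "real set"
  assumes "X \<noteq> {}" "Y \<noteq> {}" "\<And>a b. a \<in> X \<Longrightarrow> b \<in> Y \<Longrightarrow> z \<le> a + b"
  shows "z \<le> Inf X + Inf Y"
proof -
  have "z - Inf Y \<le> a" if a: "a \<in> X" for a
  proof -
    have "z - a \<le> Inf Y" by (rule cInf_greatest) (use assms a in force)+
    thus ?thesis by linarith
  qed
  hence "z - Inf Y \<le> Inf X" by (intro cInf_greatest) (use assms in auto)
  thus ?thesis by linarith
qed

lemma le_Inf_scale:
  fixes X :: "real set"
  assumes "X \<noteq> {}" "c > 0" "\<And>a. a \<in> X \<Longrightarrow> z \<le> c * a"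
  shows "z \<le> c * Inf X"
proof -
  have "z / c \<le> Inf X"
    by (rule cInf_greatest) (use assms in \<open>auto simp: divide_le_eq mult.commute\<close>)
  thus ?thesis using assms(2) by (simp add: divide_le_eq mult.commute)
qed

section \<open>A dominated linear functional\<close>

lemma convex_cone_fun_insert_zero:
  assumes "convex_cone_fun \<Gamma>"
  shows "convex_cone_fun (insert (\<lambda>_. 0) \<Gamma>)"
  unfolding convex_cone_fun_def
proof (intro ballI allI impI)
  have cone: "(\<lambda>x. a * f x + b * g x) \<in> \<Gamma>" if "f \<in> \<Gamma>" "g \<in> \<Gamma>" "a \<ge> 0" "b \<ge> 0" for f g a b
    using assms that unfolding convex_cone_fun_def by blast
  have scale: "(\<lambda>x. a * f x) \<in> \<Gamma>" if "f \<in> \<Gamma>" "a \<ge> 0" for f a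
    using cone[OF that(1) that(1) that(2) order_refl] by simp
  fix f g and a b :: real
  assume f: "f \<in> insert (\<lambda>_. 0) \<Gamma>" and g: "g \<in> insert (\<lambda>_. 0) \<Gamma>" and ab: "a \<ge> 0" "b \<ge> 0"
  consider "f \<in> \<Gamma>" "g \<in> \<Gamma>" | "f = (\<lambda>_. 0)" | "g = (\<lambda>_. 0)" using f g by blast
  thus "(\<lambda>x. a * f x + b * g x) \<in> insert (\<lambda>_. 0) \<Gamma>"
  proof cases
    case 2 thus ?thesis using g scale[OF _ ab(2), of g] by auto
  next
    case 3 thus ?thesis using f scale[OF _ ab(1), of f] by auto
  qed (use cone ab in blast)
qed

locale cone_avoiding_one = regular_order +
  fixes G :: "('a \<Rightarrow> real) set"
  assumes cone: "convex_cone_fun G"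
    and zero_in_G: "(\<lambda>_. 0) \<in> G"
    and not_ge_one: "f \<in> G \<Longrightarrow> \<not> R f (\<lambda>_. 1)"
begin

definition hedge_prices :: "('a \<Rightarrow> real) \<Rightarrow> real set" where
  "hedge_prices g = {t. \<exists>f\<in>G. R (\<lambda>x. t + f x - g x) (\<lambda>_. 0)}"

lemma G_cone: "f \<in> G \<Longrightarrow> g \<in> G \<Longrightarrow> a \<ge> 0 \<Longrightarrow> b \<ge> 0 \<Longrightarrow> (\<lambda>x. a * f x + b * g x) \<in> G"
  using cone unfolding convex_cone_fun_def by blast

lemma G_scale: "f \<in> G \<Longrightarrow> c \<ge> 0 \<Longrightarrow> (\<lambda>x. c * f x) \<in> G"
  using G_cone[of f f c 0] by simp

lemma G_add: "f \<in> G \<Longrightarrow> g \<in> G \<Longrightarrow> (\<lambda>x. f x + g x) \<in> G"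
  using G_cone[of f g 1 1] by simp

lemma not_ge_pos:
  assumes f: "f \<in> G" and d: "d > 0"
  shows "\<not> R f (\<lambda>_. d)"
proof
  assume "R f (\<lambda>_. d)"
  from R_scale[OF _ this, of "1/d"] d have "R (\<lambda>x. (1/d) * f x) (\<lambda>_. 1)" by simp
  thus False using not_ge_one[OF G_scale[OF f, of "1/d"]] d by simp
qed

lemma zero_in_hedge_prices:
  assumes "f \<in> G" "R f g"
  shows "0 \<in> hedge_prices g"
proof -
  have "R (\<lambda>x. 0 + f x - g x) (\<lambda>_. 0)" using assms(2) R_diff_iff[of f g] by simp
  thus ?thesis unfolding hedge_prices_def using assms(1) by blast
qed

lemma bound_in_hedge_prices:
  assumes "\<And>x. \<bar>g x\<bar> \<le> C"
  shows "C \<in> hedge_prices g"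
proof -
  have "R (\<lambda>x. C + 0 - g x) (\<lambda>_. 0)"
  proof (rule R_nonneg)
    fix x show "0 \<le> C + 0 - g x" using assms[of x] by linarith
  qed
  thus ?thesis unfolding hedge_prices_def by (intro CollectI bexI[OF _ zero_in_G]) simp
qed

lemma hedge_prices_ge:
  assumes b: "\<And>x. \<bar>g x\<bar> \<le> C" and t: "t \<in> hedge_prices g"
  shows "- C \<le> t"
proof (rule ccontr)
  assume "\<not> - C \<le> t"
  obtain f where f: "f \<in> G" "R (\<lambda>x. t + f x - g x) (\<lambda>_. 0)"
    using t unfolding hedge_prices_def by blast
  have "R (\<lambda>x. g x + C) (\<lambda>_. 0)"
  proof (rule R_nonneg)
    fix x show "0 \<le> g x + C" using b[of x] by linarith
  qed
  from R_add[OF f(2) this] have "R (\<lambda>x. f x - (- (t + C))) (\<lambda>_. 0)"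
    by (rule R_cong) auto
  hence "R f (\<lambda>_. - (t + C))" by (simp only: R_diff_iff)
  thus False using not_ge_pos[OF f(1), of "- (t + C)"] \<open>\<not> - C \<le> t\<close> by linarith
qed

lemma hedge_prices_add: "s \<in> hedge_prices g \<Longrightarrow> t \<in> hedge_prices h \<Longrightarrow> s + t \<in> hedge_prices (\<lambda>x. g x + h x)"
proof -
  assume "s \<in> hedge_prices g" "t \<in> hedge_prices h"
  then obtain f1 f2 where f: "f1 \<in> G" "R (\<lambda>x. s + f1 x - g x) (\<lambda>_. 0)"
    "f2 \<in> G" "R (\<lambda>x. t + f2 x - h x) (\<lambda>_. 0)" unfolding hedge_prices_def by blast
  from R_add[OF f(2) f(4)] have "R (\<lambda>x. (s + t) + (f1 x + f2 x) - (g x + h x)) (\<lambda>_. 0)"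
    by (rule R_cong) auto
  thus ?thesis unfolding hedge_prices_def by (intro CollectI bexI[OF _ G_add[OF f(1) f(3)]]) simp
qed

lemma hedge_prices_scale: "c > 0 \<Longrightarrow> t \<in> hedge_prices g \<Longrightarrow> c * t \<in> hedge_prices (\<lambda>x. c * g x)"
proof -
  assume c: "c > 0" and "t \<in> hedge_prices g"
  then obtain f where f: "f \<in> G" "R (\<lambda>x. t + f x - g x) (\<lambda>_. 0)" unfolding hedge_prices_def by blast
  from R_scale[OF less_imp_le[OF c] f(2)] have "R (\<lambda>x. c * t + c * f x - c * g x) (\<lambda>_. 0)"
    by (rule R_cong) (auto simp: algebra_simps)
  thus ?thesis unfolding hedge_prices_def
    by (intro CollectI bexI[OF _ G_scale[OF f(1), of c]]) (use c in simp_all)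
qed

lemma hedge_prices_nonempty: "bounded_fun g \<Longrightarrow> hedge_prices g \<noteq> {}"
  unfolding bounded_fun_def using bound_in_hedge_prices by blast

lemma bdd_below_hedge_prices: "bounded_fun g \<Longrightarrow> bdd_below (hedge_prices g)"
  unfolding bounded_fun_def bdd_below_def using hedge_prices_ge by blast

text \<open>Setting the functionals to \<open>0\<close> off the bounded functions makes the pointwise order on them antisymmetric.\<close>

definition dominated_sublinear :: "(('a \<Rightarrow> real) \<Rightarrow> real) set" where
  "dominated_sublinear = {q. (\<forall>g. \<not> bounded_fun g \<longrightarrow> q g = 0) \<and>
     (\<forall>g h. bounded_fun g \<longrightarrow> bounded_fun h \<longrightarrow> q (\<lambda>x. g x + h x) \<le> q g + q h) \<and>
     (\<forall>g c. bounded_fun g \<longrightarrow> c > 0 \<longrightarrow> q (\<lambda>x. c * g x) \<le> c * q g) \<and>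
     (\<forall>g t. bounded_fun g \<longrightarrow> t \<in> hedge_prices g \<longrightarrow> q g \<le> t)}"

context
  fixes q assumes q: "q \<in> dominated_sublinear"
begin

lemma dominated_sublinear_add: "bounded_fun g \<Longrightarrow> bounded_fun h \<Longrightarrow> q (\<lambda>x. g x + h x) \<le> q g + q h"
  using q unfolding dominated_sublinear_def by blast

lemma dominated_sublinear_scale: "bounded_fun g \<Longrightarrow> c > 0 \<Longrightarrow> q (\<lambda>x. c * g x) \<le> c * q g"
  using q unfolding dominated_sublinear_def by blast

lemma dominated_sublinear_le: "bounded_fun g \<Longrightarrow> t \<in> hedge_prices g \<Longrightarrow> q g \<le> t"
  using q unfolding dominated_sublinear_def by blast

lemma dominated_sublinear_zero: "q (\<lambda>_. 0) = 0"
  using dominated_sublinear_scale[OF bounded_fun_const, of 2 0]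
    dominated_sublinear_scale[OF bounded_fun_const, of "1/2" 0]
  by simp

lemma dominated_sublinear_minus: "bounded_fun g \<Longrightarrow> 0 \<le> q g + q (\<lambda>x. - g x)"
  using dominated_sublinear_add[of g "\<lambda>x. - g x"] bounded_fun_minus[of g] dominated_sublinear_zero
  by simp

lemma dominated_sublinear_ge:
  assumes b: "\<And>x. \<bar>g x\<bar> \<le> C"
  shows "- C \<le> q g"
proof -
  have g: "bounded_fun g" using b by (rule bounded_funI)
  have "q (\<lambda>x. - g x) \<le> C"
    by (rule dominated_sublinear_le[OF bounded_fun_minus[OF g] bound_in_hedge_prices]) (use b in simp)
  thus ?thesis using dominated_sublinear_minus[OF g] by linarith
qed

lemma dominated_sublinear_scale_ge: "t \<ge> 0 \<Longrightarrow> bounded_fun y \<Longrightarrow> t * q y \<le> q (\<lambda>z. t * y z)"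
proof (cases "t = 0")
  case False
  assume t: "t \<ge> 0" and y: "bounded_fun y"
  hence "q (\<lambda>z. (1/t) * (t * y z)) \<le> (1/t) * q (\<lambda>z. t * y z)"
    using False by (intro dominated_sublinear_scale bounded_fun_scale) auto
  thus ?thesis using t False by (simp add: field_simps)
qed (simp add: dominated_sublinear_zero)

end

definition price_bound :: "('a \<Rightarrow> real) \<Rightarrow> real" where
  "price_bound g = (if bounded_fun g then Inf (hedge_prices g) else 0)"

lemma price_bound_dominated_sublinear: "price_bound \<in> dominated_sublinear"
  unfolding dominated_sublinear_def
proof (intro CollectI conjI allI impI)
  fix g h :: "'a \<Rightarrow> real" assume g: "bounded_fun g" and h: "bounded_fun h"
  have "Inf (hedge_prices (\<lambda>x. g x + h x)) \<le> Inf (hedge_prices g) + Inf (hedge_prices h)"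
    by (rule le_Inf_add[OF hedge_prices_nonempty[OF g] hedge_prices_nonempty[OF h]],
        rule cInf_lower[OF hedge_prices_add bdd_below_hedge_prices[OF bounded_fun_add[OF g h]]])
  thus "price_bound (\<lambda>x. g x + h x) \<le> price_bound g + price_bound h"
    using g h bounded_fun_add[OF g h] by (simp add: price_bound_def)
next
  fix g :: "'a \<Rightarrow> real" and c :: real assume g: "bounded_fun g" and c: "c > 0"
  have "Inf (hedge_prices (\<lambda>x. c * g x)) \<le> c * Inf (hedge_prices g)"
    by (rule le_Inf_scale[OF hedge_prices_nonempty[OF g] c],
        rule cInf_lower[OF hedge_prices_scale[OF c] bdd_below_hedge_prices[OF bounded_fun_scale[OF g]]])
  thus "price_bound (\<lambda>x. c * g x) \<le> c * price_bound g"
    using g bounded_fun_scale[OF g] by (simp add: price_bound_def)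
next
  fix g :: "'a \<Rightarrow> real" and t assume g: "bounded_fun g" and t: "t \<in> hedge_prices g"
  show "price_bound g \<le> t" using cInf_lower[OF t bdd_below_hedge_prices[OF g]] g by (simp add: price_bound_def)
qed (simp add: price_bound_def)

definition chain_inf :: "(('a \<Rightarrow> real) \<Rightarrow> real) set \<Rightarrow> ('a \<Rightarrow> real) \<Rightarrow> real" where
  "chain_inf C g = (if bounded_fun g then Inf ((\<lambda>q. q g) ` C) else 0)"

lemma chain_inf_le:
  assumes "C \<subseteq> dominated_sublinear" "q \<in> C" "bounded_fun g"
  shows "chain_inf C g \<le> q g"
proof -
  obtain B where "\<And>x. \<bar>g x\<bar> \<le> B" using assms(3) unfolding bounded_fun_def by blast
  hence "bdd_below ((\<lambda>q. q g) ` C)"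
    using assms(1) dominated_sublinear_ge unfolding bdd_below_def by blast
  thus ?thesis unfolding chain_inf_def using assms(2,3) by (simp add: cInf_lower)
qed

lemma chain_inf_dominated_sublinear:
  assumes CS: "C \<subseteq> dominated_sublinear" and ne: "C \<noteq> {}"
    and chain: "\<And>q1 q2. q1 \<in> C \<Longrightarrow> q2 \<in> C \<Longrightarrow>
      (\<forall>g. bounded_fun g \<longrightarrow> q1 g \<le> q2 g) \<or> (\<forall>g. bounded_fun g \<longrightarrow> q2 g \<le> q1 g)"
  shows "chain_inf C \<in> dominated_sublinear"
  unfolding dominated_sublinear_def
proof (intro CollectI conjI allI impI)
  have ne': "(\<lambda>q. q g) ` C \<noteq> {}" for g using ne by auto
  have sub: "q \<in> dominated_sublinear" if "q \<in> C" for q using CS that by blast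
  fix g h :: "'a \<Rightarrow> real" assume g: "bounded_fun g" and h: "bounded_fun h"
  have gh: "bounded_fun (\<lambda>x. g x + h x)" by (rule bounded_fun_add[OF g h])
  \<comment> \<open>the larger of \<open>q1\<close>, \<open>q2\<close> in the chain bounds \<open>q1 g + q2 h\<close> from below\<close>
  have "chain_inf C (\<lambda>x. g x + h x) \<le> Inf ((\<lambda>q. q g) ` C) + Inf ((\<lambda>q. q h) ` C)"
  proof (rule le_Inf_add[OF ne' ne'])
    fix a b assume "a \<in> (\<lambda>q. q g) ` C" "b \<in> (\<lambda>q. q h) ` C"
    then obtain q1 q2 where q: "q1 \<in> C" "q2 \<in> C" "a = q1 g" "b = q2 h" by blast
    have "chain_inf C (\<lambda>x. g x + h x) \<le> q1 (\<lambda>x. g x + h x)" "chain_inf C (\<lambda>x. g x + h x) \<le> q2 (\<lambda>x. g x + h x)"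
      using chain_inf_le[OF CS _ gh] q by auto
    moreover have "q1 (\<lambda>x. g x + h x) \<le> q1 g + q1 h" "q2 (\<lambda>x. g x + h x) \<le> q2 g + q2 h"
      using dominated_sublinear_add[OF sub g h] q by auto
    ultimately show "chain_inf C (\<lambda>x. g x + h x) \<le> a + b"
      using chain[OF q(1) q(2)] g h q(3,4) by force
  qed
  thus "chain_inf C (\<lambda>x. g x + h x) \<le> chain_inf C g + chain_inf C h"
    using g h by (simp add: chain_inf_def)
next
  have ne': "(\<lambda>q. q g) ` C \<noteq> {}" for g using ne by auto
  have sub: "q \<in> dominated_sublinear" if "q \<in> C" for q using CS that by blast
  fix g :: "'a \<Rightarrow> real" and c :: real assume g: "bounded_fun g" and c: "c > 0"
  have "chain_inf C (\<lambda>x. c * g x) \<le> c * Inf ((\<lambda>q. q g) ` C)"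
  proof (rule le_Inf_scale[OF ne' c])
    fix a assume "a \<in> (\<lambda>q. q g) ` C"
    then obtain q where q: "q \<in> C" "a = q g" by blast
    have "chain_inf C (\<lambda>x. c * g x) \<le> q (\<lambda>x. c * g x)"
      by (rule chain_inf_le[OF CS q(1) bounded_fun_scale[OF g]])
    also have "\<dots> \<le> c * q g" by (rule dominated_sublinear_scale[OF sub[OF q(1)] g c])
    finally show "chain_inf C (\<lambda>x. c * g x) \<le> c * a" using q by simp
  qed
  thus "chain_inf C (\<lambda>x. c * g x) \<le> c * chain_inf C g" using g by (simp add: chain_inf_def)
next
  fix g :: "'a \<Rightarrow> real" and t assume g: "bounded_fun g" and t: "t \<in> hedge_prices g"
  obtain q where q: "q \<in> C" using ne by blast
  show "chain_inf C g \<le> t"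
    using chain_inf_le[OF CS q g] dominated_sublinear_le[OF _ g t, of q] q CS by force
qed (simp add: chain_inf_def)

lemma exists_minimal_dominated_sublinear:
  "\<exists>q\<in>dominated_sublinear. \<forall>q'\<in>dominated_sublinear.
     (\<forall>g. bounded_fun g \<longrightarrow> q' g \<le> q g) \<longrightarrow> q' = q"
proof -
  define P where "P = (\<lambda>q1 q2 :: ('a \<Rightarrow> real) \<Rightarrow> real. \<forall>g. bounded_fun g \<longrightarrow> q2 g \<le> q1 g)"
  have "partial_order_on dominated_sublinear (relation_of P dominated_sublinear)"
  proof (rule partial_order_on_relation_ofI)
    fix a b assume ab: "a \<in> dominated_sublinear" "b \<in> dominated_sublinear" "P a b" "P b a"
    show "a = b"
    proof
      fix g show "a g = b g"
        using ab unfolding P_def dominated_sublinear_def by (cases "bounded_fun g") (auto intro: antisym)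
    qed
  qed (auto simp: P_def intro: order_trans)
  moreover have "\<exists>u\<in>dominated_sublinear. \<forall>a\<in>C. P a u"
    if C: "C \<in> Chains (relation_of P dominated_sublinear)" for C
  proof (cases "C = {}")
    case True thus ?thesis using price_bound_dominated_sublinear by blast
  next
    case False
    have CS: "C \<subseteq> dominated_sublinear" using C unfolding Chains_def relation_of_def by auto
    have "(\<forall>g. bounded_fun g \<longrightarrow> q1 g \<le> q2 g) \<or> (\<forall>g. bounded_fun g \<longrightarrow> q2 g \<le> q1 g)"
      if "q1 \<in> C" "q2 \<in> C" for q1 q2
      using C that unfolding Chains_def relation_of_def P_def by blast
    thus ?thesis using chain_inf_dominated_sublinear[OF CS False] chain_inf_le[OF CS]
      unfolding P_def by blast
  qed
  ultimately have "\<exists>m\<in>dominated_sublinear. \<forall>a\<in>dominated_sublinear. P m a \<longrightarrow> a = m"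
    by (rule predicate_Zorn)
  thus ?thesis unfolding P_def by blast
qed

text \<open>The standard step of the Hahn--Banach theorem: shifting in the direction \<open>y\<close> and optimising
  over the shift gives a smaller dominated sublinear functional, which is smaller still at \<open>-y\<close>.\<close>

definition shift_inf :: "(('a \<Rightarrow> real) \<Rightarrow> real) \<Rightarrow> ('a \<Rightarrow> real) \<Rightarrow> ('a \<Rightarrow> real) \<Rightarrow> real" where
  "shift_inf q y g =
     (if bounded_fun g then Inf ((\<lambda>t. q (\<lambda>z. g z + t * y z) - t * q y) ` {0..}) else 0)"

context
  fixes q :: "('a \<Rightarrow> real) \<Rightarrow> real" and y :: "'a \<Rightarrow> real"
  assumes q: "q \<in> dominated_sublinear" and y: "bounded_fun y"
begin

lemma shift_inf_le:
  assumes g: "bounded_fun g" and t: "t \<ge> 0"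
  shows "shift_inf q y g \<le> q (\<lambda>z. g z + t * y z) - t * q y"
proof -
  have "- q (\<lambda>z. - g z) \<le> q (\<lambda>z. g z + s * y z) - s * q y" if s: "s \<ge> 0" for s
  proof -
    have gs: "bounded_fun (\<lambda>z. g z + s * y z)" by (rule bounded_fun_add[OF g bounded_fun_scale[OF y]])
    have "q (\<lambda>z. (g z + s * y z) + - g z) \<le> q (\<lambda>z. g z + s * y z) + q (\<lambda>z. - g z)"
      by (rule dominated_sublinear_add[OF q gs bounded_fun_minus[OF g]])
    thus ?thesis using dominated_sublinear_scale_ge[OF q s y] by simp
  qed
  hence "bdd_below ((\<lambda>t. q (\<lambda>z. g z + t * y z) - t * q y) ` {0..})"
    unfolding bdd_below_def by blast
  thus ?thesis unfolding shift_inf_def using g t by (simp add: cInf_lower)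
qed

lemma shift_inf_dominated_sublinear: "shift_inf q y \<in> dominated_sublinear"
  unfolding dominated_sublinear_def
proof (intro CollectI conjI allI impI)
  have ne: "(\<lambda>t. q (\<lambda>z. g z + t * y z) - t * q y) ` {0..} \<noteq> {}" for g by auto
  fix g h :: "'a \<Rightarrow> real" assume g: "bounded_fun g" and h: "bounded_fun h"
  have gh: "bounded_fun (\<lambda>x. g x + h x)" by (rule bounded_fun_add[OF g h])
  have "shift_inf q y (\<lambda>x. g x + h x) \<le>
     Inf ((\<lambda>t. q (\<lambda>z. g z + t * y z) - t * q y) ` {0..}) + Inf ((\<lambda>t. q (\<lambda>z. h z + t * y z) - t * q y) ` {0..})"
  proof (rule le_Inf_add[OF ne ne])
    fix a b assume "a \<in> (\<lambda>t. q (\<lambda>z. g z + t * y z) - t * q y) ` {0..}"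
      "b \<in> (\<lambda>t. q (\<lambda>z. h z + t * y z) - t * q y) ` {0..}"
    then obtain t1 t2 where t: "t1 \<ge> 0" "t2 \<ge> 0" "a = q (\<lambda>z. g z + t1 * y z) - t1 * q y"
      "b = q (\<lambda>z. h z + t2 * y z) - t2 * q y" by auto
    have "shift_inf q y (\<lambda>x. g x + h x) \<le> q (\<lambda>z. (g z + h z) + (t1 + t2) * y z) - (t1 + t2) * q y"
      using shift_inf_le[OF gh, of "t1 + t2"] t by simp
    also have "q (\<lambda>z. (g z + h z) + (t1 + t2) * y z) = q (\<lambda>z. (g z + t1 * y z) + (h z + t2 * y z))"
      by (simp add: algebra_simps)
    also have "\<dots> \<le> q (\<lambda>z. g z + t1 * y z) + q (\<lambda>z. h z + t2 * y z)"
      by (intro dominated_sublinear_add[OF q] bounded_fun_add bounded_fun_scale g h y)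
    finally show "shift_inf q y (\<lambda>x. g x + h x) \<le> a + b" using t by (simp add: algebra_simps)
  qed
  thus "shift_inf q y (\<lambda>x. g x + h x) \<le> shift_inf q y g + shift_inf q y h"
    using g h by (simp add: shift_inf_def)
next
  have ne: "(\<lambda>t. q (\<lambda>z. g z + t * y z) - t * q y) ` {0..} \<noteq> {}" for g by auto
  fix g :: "'a \<Rightarrow> real" and c :: real assume g: "bounded_fun g" and c: "c > 0"
  have "shift_inf q y (\<lambda>x. c * g x) \<le> c * Inf ((\<lambda>t. q (\<lambda>z. g z + t * y z) - t * q y) ` {0..})"
  proof (rule le_Inf_scale[OF ne c])
    fix a assume "a \<in> (\<lambda>t. q (\<lambda>z. g z + t * y z) - t * q y) ` {0..}"
    then obtain t where t: "t \<ge> 0" "a = q (\<lambda>z. g z + t * y z) - t * q y" by auto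
    have "shift_inf q y (\<lambda>x. c * g x) \<le> q (\<lambda>z. c * g z + (c * t) * y z) - (c * t) * q y"
      using shift_inf_le[OF bounded_fun_scale[OF g], of "c * t"] t c by simp
    also have "q (\<lambda>z. c * g z + (c * t) * y z) = q (\<lambda>z. c * (g z + t * y z))"
      by (simp add: algebra_simps)
    also have "\<dots> \<le> c * q (\<lambda>z. g z + t * y z)"
      by (rule dominated_sublinear_scale[OF q bounded_fun_add[OF g bounded_fun_scale[OF y]] c])
    finally show "shift_inf q y (\<lambda>x. c * g x) \<le> c * a" unfolding t(2) by (simp add: algebra_simps)
  qed
  thus "shift_inf q y (\<lambda>x. c * g x) \<le> c * shift_inf q y g" using g bounded_fun_scale[OF g] by (simp add: shift_inf_def)
next
  fix g :: "'a \<Rightarrow> real" and t assume g: "bounded_fun g" and t: "t \<in> hedge_prices g"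
  show "shift_inf q y g \<le> t"
    using shift_inf_le[OF g, of 0] dominated_sublinear_le[OF q g t] by simp
qed (simp add: shift_inf_def)

end

lemma minimal_dominated_sublinear_minus:
  assumes q: "q \<in> dominated_sublinear"
    and minimal: "\<forall>q'\<in>dominated_sublinear. (\<forall>g. bounded_fun g \<longrightarrow> q' g \<le> q g) \<longrightarrow> q' = q"
    and y: "bounded_fun y"
  shows "q (\<lambda>x. - y x) = - q y"
proof -
  have "shift_inf q y = q"
    using minimal shift_inf_dominated_sublinear[OF q y] shift_inf_le[OF q y _ order_refl] by simp
  hence "q (\<lambda>x. - y x) \<le> q (\<lambda>z. - y z + 1 * y z) - 1 * q y"
    using shift_inf_le[OF q y bounded_fun_minus[OF y], of 1] by simp
  hence "q (\<lambda>x. - y x) \<le> - q y" using dominated_sublinear_zero[OF q] by simp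
  thus ?thesis using dominated_sublinear_minus[OF q y] by linarith
qed

lemma exists_dominated_linear:
  "\<exists>\<phi>. (\<forall>g h. bounded_fun g \<longrightarrow> bounded_fun h \<longrightarrow> \<phi> (\<lambda>x. g x + h x) = \<phi> g + \<phi> h) \<and>
       (\<forall>g c. bounded_fun g \<longrightarrow> \<phi> (\<lambda>x. c * g x) = c * \<phi> g) \<and>
       (\<forall>g t. bounded_fun g \<longrightarrow> t \<in> hedge_prices g \<longrightarrow> \<phi> g \<le> t)"
proof -
  obtain q where q: "q \<in> dominated_sublinear"
    and minimal: "\<forall>q'\<in>dominated_sublinear. (\<forall>g. bounded_fun g \<longrightarrow> q' g \<le> q g) \<longrightarrow> q' = q"
    using exists_minimal_dominated_sublinear by blast
  note minus = minimal_dominated_sublinear_minus[OF q minimal]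
  have "q (\<lambda>x. g x + h x) = q g + q h" if g: "bounded_fun g" and h: "bounded_fun h" for g h
  proof -
    have "q (\<lambda>x. - g x + - h x) \<le> q (\<lambda>x. - g x) + q (\<lambda>x. - h x)"
      by (rule dominated_sublinear_add[OF q bounded_fun_minus[OF g] bounded_fun_minus[OF h]])
    moreover have "q (\<lambda>x. - g x + - h x) = - q (\<lambda>x. g x + h x)"
      using minus[OF bounded_fun_add[OF g h]] by simp
    ultimately show ?thesis using dominated_sublinear_add[OF q g h] minus[OF g] minus[OF h] by linarith
  qed
  moreover have "q (\<lambda>x. c * g x) = c * q g" if g: "bounded_fun g" for g c
  proof -
    have pos: "q (\<lambda>x. c * g x) = c * q g" if c: "c > 0" for c
      using dominated_sublinear_scale[OF q g c] dominated_sublinear_scale_ge[OF q _ g, of c] c by simp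
    consider "c > 0" | "c = 0" | "- c > 0" by linarith
    thus ?thesis
    proof cases
      case 3
      have "q (\<lambda>x. c * g x) = q (\<lambda>x. - ((- c) * g x))" by simp
      also have "\<dots> = c * q g" using minus[OF bounded_fun_scale[OF g]] pos[OF 3] by simp
      finally show ?thesis .
    qed (use pos dominated_sublinear_zero[OF q] in auto)
  qed
  ultimately show ?thesis using dominated_sublinear_le[OF q] by blast
qed

end

section \<open>The representing probability\<close>

lemma tendsto_inverse_Suc_close:
  fixes u v :: "nat \<Rightarrow> real"
  assumes "\<And>n. \<bar>u n - v n\<bar> \<le> 1 / (real n + 1)" and "v \<longlonglongrightarrow> L"
  shows "u \<longlonglongrightarrow> L"
proof -
  have "(\<lambda>n. u n - v n) \<longlonglongrightarrow> 0"
  proof (rule tendsto_sandwich[OF _ _ tendsto_minus[OF lim_inverse_Suc, simplified] lim_inverse_Suc])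
    have "- (1 / (real n + 1)) \<le> u n - v n" "u n - v n \<le> 1 / (real n + 1)" for n
      using assms(1)[of n] by linarith+
    thus "\<forall>\<^sub>F n in sequentially. - (1 / (real n + 1)) \<le> u n - v n"
      "\<forall>\<^sub>F n in sequentially. u n - v n \<le> 1 / (real n + 1)"
      by simp_all
  qed
  from tendsto_add[OF this assms(2)] show ?thesis by simp
qed

locale dominated_linear = cone_avoiding_one +
  fixes \<phi> :: "('a \<Rightarrow> real) \<Rightarrow> real"
  assumes phi_add: "bounded_fun g \<Longrightarrow> bounded_fun h \<Longrightarrow> \<phi> (\<lambda>x. g x + h x) = \<phi> g + \<phi> h"
    and phi_scale: "bounded_fun g \<Longrightarrow> \<phi> (\<lambda>x. c * g x) = c * \<phi> g"
    and phi_le_hedge_price: "bounded_fun g \<Longrightarrow> t \<in> hedge_prices g \<Longrightarrow> \<phi> g \<le> t"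
begin

lemma phi_diff: "bounded_fun g \<Longrightarrow> bounded_fun h \<Longrightarrow> \<phi> (\<lambda>x. g x - h x) = \<phi> g - \<phi> h"
  using phi_add[of g "\<lambda>x. (-1) * h x"] phi_scale[of h "-1"] bounded_fun_scale[of h "-1"] by simp

lemma phi_nonneg:
  assumes g: "bounded_fun g" and nonneg: "\<And>x. g x \<ge> 0"
  shows "\<phi> g \<ge> 0"
proof -
  have "R (\<lambda>_. 0) (\<lambda>x. - g x)" by (rule R_diff_iff[THEN iffD1], rule R_nonneg) (simp add: nonneg)
  hence "\<phi> (\<lambda>x. - g x) \<le> 0"
    by (intro phi_le_hedge_price[OF bounded_fun_minus[OF g]] zero_in_hedge_prices[OF zero_in_G])
  thus ?thesis using phi_scale[OF g, of "-1"] by simp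
qed

lemma phi_mono: "bounded_fun g \<Longrightarrow> bounded_fun h \<Longrightarrow> (\<And>x. g x \<le> h x) \<Longrightarrow> \<phi> g \<le> \<phi> h"
  using phi_nonneg[of "\<lambda>x. h x - g x"] phi_diff[of h g] bounded_fun_diff[of h g] by simp

lemma phi_const: "\<phi> (\<lambda>_. c) = c"
proof -
  have "\<phi> (\<lambda>_. 1) \<le> 1" by (rule phi_le_hedge_price[OF bounded_fun_const bound_in_hedge_prices]) simp
  moreover have "- 1 \<in> hedge_prices (\<lambda>_. - 1)"
    unfolding hedge_prices_def by (intro CollectI bexI[OF _ zero_in_G] R_nonneg) simp
  hence "\<phi> (\<lambda>_. - 1) \<le> - 1" by (rule phi_le_hedge_price[OF bounded_fun_const])
  moreover have "\<phi> (\<lambda>_. - 1) = - \<phi> (\<lambda>_. 1)" using phi_scale[OF bounded_fun_const, of "-1" 1] by simp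
  ultimately have "\<phi> (\<lambda>_. 1) = 1" by linarith
  thus ?thesis using phi_scale[OF bounded_fun_const, of c 1] by simp
qed

lemma phi_close:
  assumes "bounded_fun g" "bounded_fun h" "\<And>x. \<bar>g x - h x\<bar> \<le> e"
  shows "\<bar>\<phi> g - \<phi> h\<bar> \<le> e"
proof -
  have "- e \<le> g x - h x" "g x - h x \<le> e" for x using assms(3)[of x] by (simp_all add: abs_le_iff)
  hence "\<phi> (\<lambda>_. - e) \<le> \<phi> (\<lambda>x. g x - h x)" "\<phi> (\<lambda>x. g x - h x) \<le> \<phi> (\<lambda>_. e)"
    by (intro phi_mono bounded_fun_diff bounded_fun_const assms(1,2); simp)+
  thus ?thesis unfolding phi_diff[OF assms(1,2)] phi_const by (simp add: abs_le_iff)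
qed

lemma phi_sum:
  "finite Y \<Longrightarrow> (\<And>y. y \<in> Y \<Longrightarrow> bounded_fun (F y)) \<Longrightarrow> \<phi> (\<lambda>x. \<Sum>y\<in>Y. F y x) = (\<Sum>y\<in>Y. \<phi> (F y))"
proof (induction Y rule: finite_induct)
  case empty thus ?case using phi_const[of 0] by simp
next
  case (insert y Y)
  thus ?case using phi_add[OF _ bounded_fun_sum, of "F y" Y F] by simp
qed

definition price_prob :: "'a set \<Rightarrow> real" where
  "price_prob A = \<phi> (indicator A)"

lemma fa_prob_price_prob: "fa_prob price_prob"
  unfolding fa_prob_def price_prob_def
proof (intro conjI allI impI)
  show "\<phi> (indicator UNIV) = 1" using phi_const[of 1] by (simp add: indicator_def)
  show "\<phi> (indicator A) \<ge> 0" for A by (rule phi_nonneg[OF bounded_fun_indicator]) (simp add: indicator_def)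
  fix A B :: "'a set" assume "A \<inter> B = {}"
  hence "indicator (A \<union> B) = (\<lambda>x. indicator A x + indicator B x :: real)"
    by (auto simp: indicator_def fun_eq_iff)
  thus "\<phi> (indicator (A \<union> B)) = \<phi> (indicator A) + \<phi> (indicator B)"
    using phi_add[OF bounded_fun_indicator bounded_fun_indicator] by simp
qed

lemma price_prob_null: "R (\<lambda>_. 0) (indicator N) \<Longrightarrow> price_prob N = 0"
  using phi_le_hedge_price[OF bounded_fun_indicator zero_in_hedge_prices[OF zero_in_G]]
    fa_prob_nonneg[OF fa_prob_price_prob, of N]
  unfolding price_prob_def by force

lemma price_prob_in_P_order: "price_prob \<in> P_order R"
  unfolding P_order_def using fa_prob_price_prob price_prob_null by blast

lemma simple_int_price_prob: "finite (range s) \<Longrightarrow> simple_int price_prob s = \<phi> s"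
proof -
  assume f: "finite (range s)"
  have "s = (\<lambda>x. \<Sum>y\<in>range s. y * indicator (s -` {y}) x)"
  proof
    fix x
    have "(\<Sum>y\<in>range s. y * indicator (s -` {y}) x) = (\<Sum>y\<in>range s. if y = s x then y else 0)"
      by (rule sum.cong) (auto simp: indicator_def)
    thus "s x = (\<Sum>y\<in>range s. y * indicator (s -` {y}) x)" using f by simp
  qed
  hence "\<phi> s = (\<Sum>y\<in>range s. \<phi> (\<lambda>x. y * indicator (s -` {y}) x))"
    using phi_sum[OF f, of "\<lambda>y x. y * indicator (s -` {y}) x"] bounded_fun_scale[OF bounded_fun_indicator]
    by metis
  thus ?thesis unfolding simple_int_def price_prob_def by (simp add: phi_scale[OF bounded_fun_indicator])
qed

lemma phi_mono_outside_null:
  assumes N: "price_prob N = 0" and g: "bounded_fun g" and h: "bounded_fun h"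
    and le: "\<And>x. x \<notin> N \<Longrightarrow> g x \<le> h x"
  shows "\<phi> g \<le> \<phi> h"
proof -
  obtain C D where C: "\<And>x. \<bar>g x\<bar> \<le> C" and D: "\<And>x. \<bar>h x\<bar> \<le> D"
    using g h unfolding bounded_fun_def by blast
  have "g x \<le> h x + (C + D) * indicator N x" for x
    using le[of x] C[of x] D[of x] by (cases "x \<in> N") (auto simp: indicator_def abs_le_iff)
  hence "\<phi> g \<le> \<phi> (\<lambda>x. h x + (C + D) * indicator N x)"
    by (intro phi_mono[OF g] bounded_fun_add[OF h] bounded_fun_scale[OF bounded_fun_indicator])
  also have "\<dots> = \<phi> h"
    using phi_add[OF h bounded_fun_scale[OF bounded_fun_indicator]] phi_scale[OF bounded_fun_indicator] N
    by (simp add: price_prob_def)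
  finally show ?thesis .
qed

lemma simple_int_abs_diff_le:
  assumes "finite (range s)" "finite (range t)" "bounded_fun g" "bounded_fun h"
    and "\<And>x. \<bar>s x - g x\<bar> \<le> d" "\<And>x. \<bar>t x - h x\<bar> \<le> e"
  shows "simple_int price_prob (\<lambda>x. \<bar>s x - t x\<bar>) \<le> \<phi> (\<lambda>x. \<bar>g x - h x\<bar>) + (d + e)"
proof -
  have gh: "bounded_fun (\<lambda>x. \<bar>g x - h x\<bar>)" by (intro bounded_fun_abs bounded_fun_diff assms(3,4))
  have "simple_int price_prob (\<lambda>x. \<bar>s x - t x\<bar>) = \<phi> (\<lambda>x. \<bar>s x - t x\<bar>)"
    by (rule simple_int_price_prob[OF finite_range_map2[OF assms(1,2)]])
  also have "\<dots> \<le> \<phi> (\<lambda>x. \<bar>g x - h x\<bar> + (d + e))"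
  proof (rule phi_mono[OF _ bounded_fun_add[OF gh bounded_fun_const]])
    show "bounded_fun (\<lambda>x. \<bar>s x - t x\<bar>)"
      by (intro bounded_fun_abs bounded_fun_diff bounded_fun_finite_range assms(1,2))
    fix x show "\<bar>s x - t x\<bar> \<le> \<bar>g x - h x\<bar> + (d + e)"
      using assms(5)[of x] assms(6)[of x] by linarith
  qed
  also have "\<dots> = \<phi> (\<lambda>x. \<bar>g x - h x\<bar>) + (d + e)"
    using phi_add[OF gh bounded_fun_const] phi_const by simp
  finally show ?thesis .
qed

text \<open>Replacing each \<open>g n\<close> by a simple function uniformly within \<open>1/(n+1)\<close> yields a determining sequence.\<close>

lemma ds_has_integral_phi_limit:
  assumes g: "\<And>n. bounded_fun (g n)"
    and meas: "\<And>\<epsilon>. \<epsilon> > 0 \<Longrightarrow> (\<lambda>n. price_prob {x. \<bar>g n x - f x\<bar> > \<epsilon>}) \<longlonglongrightarrow> 0"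
    and cauchy: "\<And>\<epsilon>. \<epsilon> > 0 \<Longrightarrow> \<exists>N. \<forall>n\<ge>N. \<forall>k\<ge>N. \<phi> (\<lambda>x. \<bar>g n x - g k x\<bar>) < \<epsilon>"
    and lim: "(\<lambda>n. \<phi> (g n)) \<longlonglongrightarrow> L"
  shows "ds_has_integral price_prob f L"
proof -
  obtain s where sf: "\<And>n. finite (range (s n))" and sa: "\<And>n x. \<bar>s n x - g n x\<bar> \<le> 1 / (real n + 1)"
    using uniform_simple_approx_seq[of g, OF g] by blast
  have bs: "bounded_fun (s n)" for n by (rule bounded_fun_finite_range[OF sf])
  have "determining_seq price_prob s f"
    unfolding determining_seq_def
  proof (intro conjI allI impI)
    fix \<epsilon> :: real assume e: "\<epsilon> > 0"
    obtain M where M: "\<forall>n\<ge>M. 1 / (real n + 1) < \<epsilon>/2" using inverse_Suc_less[of "\<epsilon>/2"] e by auto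
    have "{x. \<bar>s n x - f x\<bar> > \<epsilon>} \<subseteq> {x. \<bar>g n x - f x\<bar> > \<epsilon>/2}" if "n \<ge> M" for n
    proof
      fix x assume "x \<in> {x. \<bar>s n x - f x\<bar> > \<epsilon>}"
      moreover have "\<bar>s n x - g n x\<bar> < \<epsilon>/2" using M that sa[of n x] by force
      moreover have "\<bar>s n x - f x\<bar> \<le> \<bar>s n x - g n x\<bar> + \<bar>g n x - f x\<bar>"
        using abs_triangle_ineq[of "s n x - g n x" "g n x - f x"] by simp
      ultimately show "x \<in> {x. \<bar>g n x - f x\<bar> > \<epsilon>/2}" by simp
    qed
    hence "\<forall>\<^sub>F n in sequentially. price_prob {x. \<bar>s n x - f x\<bar> > \<epsilon>} \<le> price_prob {x. \<bar>g n x - f x\<bar> > \<epsilon>/2}"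
      unfolding eventually_sequentially by (auto intro: fa_prob_mono[OF fa_prob_price_prob])
    moreover have "(\<lambda>n. price_prob {x. \<bar>g n x - f x\<bar> > \<epsilon>/2}) \<longlonglongrightarrow> 0" using meas[of "\<epsilon>/2"] e by simp
    ultimately show "(\<lambda>n. price_prob {x. \<bar>s n x - f x\<bar> > \<epsilon>}) \<longlonglongrightarrow> 0"
      by (rule fa_prob_tendsto_zero_le[OF fa_prob_price_prob])
  next
    fix \<epsilon> :: real assume e: "\<epsilon> > 0"
    obtain N where N: "\<forall>n\<ge>N. \<forall>k\<ge>N. \<phi> (\<lambda>x. \<bar>g n x - g k x\<bar>) < \<epsilon>/3" using cauchy[of "\<epsilon>/3"] e by auto
    obtain M where M: "\<forall>n\<ge>M. 1 / (real n + 1) < \<epsilon>/3" using inverse_Suc_less[of "\<epsilon>/3"] e by auto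
    show "\<exists>N. \<forall>n\<ge>N. \<forall>k\<ge>N. simple_int price_prob (\<lambda>x. \<bar>s n x - s k x\<bar>) < \<epsilon>"
    proof (intro exI allI impI)
      fix n k assume n: "max N M \<le> n" and k: "max N M \<le> k"
      have "\<phi> (\<lambda>x. \<bar>g n x - g k x\<bar>) < \<epsilon>/3" using N n k by simp
      moreover have "1 / (real n + 1) < \<epsilon>/3" "1 / (real k + 1) < \<epsilon>/3" using M n k by simp_all
      ultimately show "simple_int price_prob (\<lambda>x. \<bar>s n x - s k x\<bar>) < \<epsilon>"
        using simple_int_abs_diff_le[OF sf sf g g sa sa, of n k] by linarith
    qed
  qed (rule sf)
  moreover have "(\<lambda>n. simple_int price_prob (s n)) \<longlonglongrightarrow> L"
    using tendsto_inverse_Suc_close[OF phi_close[OF bs g sa] lim] by (simp add: simple_int_price_prob[OF sf])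
  ultimately show ?thesis unfolding ds_has_integral_iff by blast
qed

lemma ds_has_integral_phi: "bounded_fun g \<Longrightarrow> ds_has_integral price_prob g (\<phi> g)"
  by (rule ds_has_integral_phi_limit[of "\<lambda>_. g"])
    (simp_all add: fa_prob_empty[OF fa_prob_price_prob] phi_const)

lemma ds_integral_phi: "bounded_fun g \<Longrightarrow> ds_integral price_prob g = \<phi> g"
  by (rule ds_integral_eqI[OF fa_prob_price_prob ds_has_integral_phi])

end

section \<open>Sufficiency\<close>

context dominated_linear
begin

context
  fixes f :: "'a \<Rightarrow> real" and a :: real
  assumes f_in_G: "f \<in> G" and f_ge: "R f (\<lambda>_. a)"
begin

lemma price_prob_below: "price_prob {x. f x \<le> a - 1} = 0"
  by (rule price_prob_null[OF R_null_set[OF f_ge]]) simp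

lemma trunc_eq_min: "f x > a - 1 \<Longrightarrow> \<bar>a\<bar> + 1 \<le> real n \<Longrightarrow> trunc f n x = min (f x) (real n)"
  unfolding trunc_eq by (auto simp: max_def min_def)

text \<open>Below \<open>-n\<close> the difference \<open>f - trunc f n\<close> equals \<open>f + n \<succeq> a + n \<ge> 0\<close>, elsewhere it is nonnegative;
  by (REST) \<open>f \<succeq> trunc f n\<close>, so \<open>0\<close> is a hedge price of \<open>trunc f n\<close>.\<close>

lemma phi_trunc_nonpos:
  assumes n: "\<bar>a\<bar> + 1 \<le> real n"
  shows "\<phi> (trunc f n) \<le> 0"
proof -
  have "R (\<lambda>x. f x - a) (\<lambda>_. 0)" using f_ge by (simp only: R_diff_iff)
  moreover have "R (\<lambda>_. a + real n) (\<lambda>_. 0)" by (rule R_nonneg) (use n in linarith)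
  ultimately have "R (\<lambda>x. f x + real n) (\<lambda>_. 0)" by (rule R_cong[OF R_add]) auto
  hence "R (\<lambda>x. (f x + real n) * indicator {x. f x < - real n} x) (\<lambda>_. 0)" by (rule R_restrict)
  moreover have "R (\<lambda>x. (f x - trunc f n x) * indicator {x. \<not> f x < - real n} x) (\<lambda>_. 0)"
    by (rule R_nonneg) (auto simp: indicator_def trunc_eq)
  ultimately have "R (\<lambda>x. f x - trunc f n x) (\<lambda>_. 0)"
    by (rule R_cong[OF R_add]) (auto simp: indicator_def trunc_eq)
  hence "0 \<in> hedge_prices (trunc f n)" by (intro zero_in_hedge_prices[OF f_in_G]) (simp only: R_diff_iff)
  thus ?thesis by (rule phi_le_hedge_price[OF bounded_fun_trunc])
qed

lemma phi_trunc_increment: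
  assumes n: "\<bar>a\<bar> + 1 \<le> real n" and k: "n \<le> k"
    and h: "bounded_fun h" "\<And>x. f x > a - 1 \<Longrightarrow> h x \<le> trunc f k x - trunc f n x"
  shows "\<phi> h \<le> \<phi> (trunc f k) - \<phi> (trunc f n)"
  using phi_mono_outside_null[OF price_prob_below h(1) bounded_fun_diff[OF bounded_fun_trunc bounded_fun_trunc]]
    h(2) phi_diff[OF bounded_fun_trunc bounded_fun_trunc] by (simp add: not_le)

lemma phi_abs_trunc_diff:
  assumes n: "\<bar>a\<bar> + 1 \<le> real n" and k: "n \<le> k"
  shows "\<phi> (\<lambda>x. \<bar>trunc f k x - trunc f n x\<bar>) \<le> \<phi> (trunc f k) - \<phi> (trunc f n)"
proof (rule phi_trunc_increment[OF n k])
  show "bounded_fun (\<lambda>x. \<bar>trunc f k x - trunc f n x\<bar>)"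
    by (intro bounded_fun_abs bounded_fun_diff bounded_fun_trunc)
  fix x assume "f x > a - 1"
  thus "\<bar>trunc f k x - trunc f n x\<bar> \<le> trunc f k x - trunc f n x"
    using trunc_eq_min[of x n] trunc_eq_min[of x k] n k by (simp add: min_def)
qed

lemma price_prob_ge_le:
  assumes n: "\<bar>a\<bar> + 1 \<le> real n" and k: "n < k"
  shows "(real k - real n) * price_prob {x. f x \<ge> real k} \<le> - \<phi> (trunc f n)"
proof -
  have "(real k - real n) * price_prob {x. f x \<ge> real k}
      = \<phi> (\<lambda>x. (real k - real n) * indicator {x. f x \<ge> real k} x)"
    by (simp add: price_prob_def phi_scale[OF bounded_fun_indicator])
  also have "\<dots> \<le> \<phi> (trunc f k) - \<phi> (trunc f n)"
  proof (rule phi_trunc_increment[OF n less_imp_le[OF k]])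
    show "bounded_fun (\<lambda>x. (real k - real n) * indicator {x. f x \<ge> real k} x)"
      by (intro bounded_fun_scale bounded_fun_indicator)
    fix x assume "f x > a - 1"
    thus "(real k - real n) * indicator {x. f x \<ge> real k} x \<le> trunc f k x - trunc f n x"
      using trunc_eq_min[of x n] trunc_eq_min[of x k] n k by (auto simp: min_def indicator_def)
  qed
  also have "\<dots> \<le> - \<phi> (trunc f n)" using phi_trunc_nonpos[of k] n k by simp
  finally show ?thesis .
qed

lemma phi_trunc_tendsto:
  obtains L where "(\<lambda>n. \<phi> (trunc f n)) \<longlonglongrightarrow> L" "L \<le> 0"
proof -
  obtain n0 :: nat where n0: "\<bar>a\<bar> + 1 \<le> real n0" using real_arch_simple by blast
  have n: "\<bar>a\<bar> + 1 \<le> real (n + n0)" for n using n0 by simp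
  have "incseq (\<lambda>n. \<phi> (trunc f (n + n0)))"
  proof (rule incseq_SucI)
    fix n
    have "0 \<le> \<phi> (\<lambda>x. \<bar>trunc f (Suc n + n0) x - trunc f (n + n0) x\<bar>)"
      by (intro phi_nonneg bounded_fun_abs bounded_fun_diff bounded_fun_trunc) simp
    also have "\<dots> \<le> \<phi> (trunc f (Suc n + n0)) - \<phi> (trunc f (n + n0))"
      by (rule phi_abs_trunc_diff[OF n]) simp
    finally show "\<phi> (trunc f (n + n0)) \<le> \<phi> (trunc f (Suc n + n0))" by simp
  qed
  moreover have "bdd_above (range (\<lambda>n. \<phi> (trunc f (n + n0))))"
    using phi_trunc_nonpos[OF n] by (intro bdd_aboveI[of _ 0]) auto
  ultimately obtain L where "(\<lambda>n. \<phi> (trunc f (n + n0))) \<longlonglongrightarrow> L"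
    using LIMSEQ_incseq_SUP by blast
  hence L: "(\<lambda>n. \<phi> (trunc f n)) \<longlonglongrightarrow> L" by (rule LIMSEQ_offset)
  moreover have "L \<le> 0" by (rule LIMSEQ_le_const2[OF L]) (use phi_trunc_nonpos n0 in \<open>auto intro!: exI[of _ n0]\<close>)
  ultimately show ?thesis by (rule that)
qed

lemma price_prob_ge_tendsto: "(\<lambda>k. price_prob {x. f x \<ge> real k}) \<longlonglongrightarrow> 0"
proof -
  obtain n0 :: nat where n0: "\<bar>a\<bar> + 1 \<le> real n0" using real_arch_simple by blast
  define D where "D = - \<phi> (trunc f n0)"
  have "filterlim (\<lambda>k. real k - real n0) at_top sequentially"
    by (rule filterlim_tendsto_add_at_top[OF tendsto_const filterlim_real_sequentially, of "- real n0", simplified])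
  hence "(\<lambda>k. D / (real k - real n0)) \<longlonglongrightarrow> 0"
    by (intro tendsto_divide_0[OF tendsto_const] filterlim_at_top_imp_at_infinity)
  moreover have "\<forall>\<^sub>F k in sequentially. price_prob {x. f x \<ge> real k} \<le> D / (real k - real n0)"
    unfolding eventually_sequentially
    using price_prob_ge_le[OF n0] by (auto intro!: exI[of _ "Suc n0"] simp: D_def field_simps)
  ultimately show ?thesis by (intro fa_prob_tendsto_zero_le[OF fa_prob_price_prob])
qed

lemma ds_has_integral_trunc_limit: "(\<lambda>n. \<phi> (trunc f n)) \<longlonglongrightarrow> L \<Longrightarrow> ds_has_integral price_prob f L"
proof (rule ds_has_integral_phi_limit[OF bounded_fun_trunc])
  obtain n0 :: nat where n0: "\<bar>a\<bar> + 1 \<le> real n0" using real_arch_simple by blast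
  fix \<epsilon> :: real assume e: "\<epsilon> > 0"
  have "price_prob {x. \<bar>trunc f n x - f x\<bar> > \<epsilon>} \<le> price_prob {x. f x \<ge> real n}" if n: "n \<ge> n0" for n
  proof -
    have "{x. \<bar>trunc f n x - f x\<bar> > \<epsilon>} \<subseteq> {x. f x \<ge> real n} \<union> {x. f x \<le> a - 1}"
    proof (rule subsetI, rule ccontr)
      fix x assume x: "x \<in> {x. \<bar>trunc f n x - f x\<bar> > \<epsilon>}" "x \<notin> {x. f x \<ge> real n} \<union> {x. f x \<le> a - 1}"
      have "\<bar>a\<bar> + 1 \<le> real n" using n n0 by linarith
      hence "trunc f n x = f x" using trunc_eq_min[of x n] x(2) by simp
      thus False using x(1) e by simp
    qed
    from fa_prob_mono[OF fa_prob_price_prob this] show ?thesis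
      using fa_prob_subadditive[OF fa_prob_price_prob, of "{x. f x \<ge> real n}" "{x. f x \<le> a - 1}"]
        price_prob_below by linarith
  qed
  hence "\<forall>\<^sub>F n in sequentially. price_prob {x. \<bar>trunc f n x - f x\<bar> > \<epsilon>} \<le> price_prob {x. f x \<ge> real n}"
    unfolding eventually_sequentially by blast
  thus "(\<lambda>n. price_prob {x. \<bar>trunc f n x - f x\<bar> > \<epsilon>}) \<longlonglongrightarrow> 0"
    by (rule fa_prob_tendsto_zero_le[OF fa_prob_price_prob _ price_prob_ge_tendsto])
next
  fix \<epsilon> :: real assume e: "\<epsilon> > 0" and lim: "(\<lambda>n. \<phi> (trunc f n)) \<longlonglongrightarrow> L"
  obtain n0 :: nat where n0: "\<bar>a\<bar> + 1 \<le> real n0" using real_arch_simple by blast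
  obtain N where N: "\<forall>n\<ge>N. \<forall>k\<ge>N. \<bar>\<phi> (trunc f n) - \<phi> (trunc f k)\<bar> < \<epsilon>"
    using CauchyD[OF LIMSEQ_imp_Cauchy[OF lim] e] by auto
  have "\<phi> (\<lambda>x. \<bar>trunc f n x - trunc f k x\<bar>) \<le> \<bar>\<phi> (trunc f n) - \<phi> (trunc f k)\<bar>"
    if "n0 \<le> n" "n0 \<le> k" for n k
  proof -
    have "\<bar>a\<bar> + 1 \<le> real n" "\<bar>a\<bar> + 1 \<le> real k" using that n0 by linarith+
    thus ?thesis
      using phi_abs_trunc_diff[of n k] phi_abs_trunc_diff[of k n]
      by (cases "n \<le> k") (simp_all add: abs_minus_commute)
  qed
  hence "\<phi> (\<lambda>x. \<bar>trunc f n x - trunc f k x\<bar>) < \<epsilon>" if "n \<ge> max N n0" "k \<ge> max N n0" for n k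
    using that N by (meson le_less_trans max.boundedE)
  thus "\<exists>N. \<forall>n\<ge>N. \<forall>k\<ge>N. \<phi> (\<lambda>x. \<bar>trunc f n x - trunc f k x\<bar>) < \<epsilon>" by blast
qed

lemma ds_integrable_trunc_int_nonpos: "ds_integrable price_prob f \<and> trunc_int price_prob f \<le> 0"
proof -
  obtain L where L: "(\<lambda>n. \<phi> (trunc f n)) \<longlonglongrightarrow> L" "L \<le> 0" by (rule phi_trunc_tendsto)
  have "trunc_int price_prob f = ereal L"
    by (rule trunc_int_eqI) (simp add: ds_integral_phi[OF bounded_fun_trunc] L(1))
  thus ?thesis using ds_has_integral_trunc_limit[OF L(1)] L(2) unfolding ds_integrable_def by auto
qed

end

end

lemma (in regular_order) representing_prob_exists:
  assumes cone: "convex_cone_fun \<Gamma>" and no: "\<not> (\<exists>f\<in>\<Gamma>. R f (\<lambda>_. 1))"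
  shows "\<exists>m\<in>P_order R. Gamma_order R \<Gamma> \<subseteq> {f. ds_integrable m f} \<and>
           (SUP f\<in>Gamma_order R \<Gamma>. trunc_int m f) \<le> 0"
proof -
  have avoiding: "cone_avoiding_one R (insert (\<lambda>_. 0) \<Gamma>)"
    by unfold_locales (use convex_cone_fun_insert_zero[OF cone] no R_triv in auto)
  then interpret cone_avoiding_one R "insert (\<lambda>_. 0) \<Gamma>" .
  obtain \<phi> where \<phi>: "\<forall>g h. bounded_fun g \<longrightarrow> bounded_fun h \<longrightarrow> \<phi> (\<lambda>x. g x + h x) = \<phi> g + \<phi> h"
    "\<forall>g c. bounded_fun g \<longrightarrow> \<phi> (\<lambda>x. c * g x) = c * \<phi> g"
    "\<forall>g t. bounded_fun g \<longrightarrow> t \<in> hedge_prices g \<longrightarrow> \<phi> g \<le> t"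
    using exists_dominated_linear by blast
  interpret dominated_linear R "insert (\<lambda>_. 0) \<Gamma>" \<phi>
    by (intro dominated_linear.intro[OF avoiding] dominated_linear_axioms.intro) (use \<phi> in blast)+
  have "ds_integrable price_prob f \<and> trunc_int price_prob f \<le> 0" if "f \<in> Gamma_order R \<Gamma>" for f
    using that ds_integrable_trunc_int_nonpos unfolding Gamma_order_def by blast
  thus ?thesis by (intro bexI[OF _ price_prob_in_P_order] conjI subsetI SUP_least) auto
qed

theorem theorem8:
  fixes R :: "('a \<Rightarrow> real) \<Rightarrow> ('a \<Rightarrow> real) \<Rightarrow> bool"
    and \<Gamma> :: "('a \<Rightarrow> real) set"
  assumes "regular_stochastic_order R"
    and "convex_cone_fun \<Gamma>"
  shows "(\<not> (\<exists>f\<in>\<Gamma>. R f (\<lambda>_. 1))) \<longleftrightarrow>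
         (\<exists>m\<in>P_order R. Gamma_order R \<Gamma> \<subseteq> {f. ds_integrable m f} \<and>
            (SUP f\<in>Gamma_order R \<Gamma>. trunc_int m f) \<le> 0)"
proof -
  interpret regular_order R by (rule regular_order.intro[OF assms(1)])
  show ?thesis
    using representing_prob_exists[OF assms(2)] not_ge_one_if_representing_prob by blast
qed

end
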